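(* Let $P=\{\sigma_c : c\in\mathbb{F}_q\}\le SL_2(\mathbb{F}_q)$, where $\sigma_c=\begin{pmatrix}1&c\\0&1\end{pmatrix}$. Then the set $\mathcal{B}=\{a_0,\Delta,\beta,\gamma_0\}$ generates the invariant ring $\mathbb{F}[V]^P$ as an $\mathbb{F}$-algebra; in fact $\mathcal{B}$ is a SAGBI basis for $\mathbb{F}[V]^P$ with respect to the graded reverse lexicographic order with $a_0<a_1<a_2$.
   Context: Let $p>2$ be a prime, $q=p^n$, and $\mathbb{F}$ a field of characteristic $p$ containing $\mathbb{F}_q$. Let $\mathbb{F}[V]=\mathbb{F}[a_0,a_1,a_2]$ (the symmetric algebra on the dual of the second symmetric power of the natural $2$-dimensional representation). The group $GL_2(\mathbb{F})$ acts on the right on $\mathbb{F}[a_0,a_1,a_2]$ by algebra automorphisms: for $g=\begin{pmatrix}\alpha&\beta'\\ \gamma'&\delta\end{pmatrix}$, $a_2 g=\alpha^2a_2+2\alpha\beta' a_1+\beta'^2a_0$, $a_1g=\alpha\gamma' a_2+(\alpha\delta+\beta'\gamma')a_1+\beta'\delta a_0$, $a_0g=\gamma'^2a_2+2\gamma'\delta a_1+\delta^2a_0$ (so $a_2,a_1,a_0$ transform like $u^2,uv,v^2$ under $u\mapsto \alpha u+\beta' v$, $v\mapsto\gamma' u+\delta v$). In particular $a_2\sigma_c=a_2+2ca_1+c^2a_0$, $a_1\sigma_c=a_1+ca_0$, $a_0\sigma_c=a_0$. For a subgroup $G$, $\mathbb{F}[V]^G$ denotes the ring of $G$-invariant polynomials.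 Define $\Delta=a_1^2-a_0a_2$, $\beta=\prod_{c\in\mathbb{F}_q}(a_1+ca_0)=a_1^q-a_0^{q-1}a_1$, and for $k\in\mathbb{F}_q$, $\gamma_k=\prod_{c\in\mathbb{F}_q}(a_2+2ca_1+(c^2-k)a_0)$. A SAGBI basis of a subalgebra $R$ of a polynomial ring (w.r.t. a monomial order) is a subset of $R$ whose lead monomials generate the algebra of lead monomials of elements of $R$. *)

theory Defs
  imports Main "HOL-Library.Poly_Mapping" "HOL-Computational_Algebra.Primes"
begin

datatype var = A0 | A1 | A2

type_synonym monom = "var \<Rightarrow>\<^sub>0 nat"
type_synonym 'a mpoly3 = "monom \<Rightarrow>\<^sub>0 'a"

definition Var :: "var \<Rightarrow> 'a::comm_ring_1 mpoly3" where
  "Var v = Poly_Mapping.single (Poly_Mapping.single v 1) 1"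

definition Const :: "'a::comm_ring_1 \<Rightarrow> 'a mpoly3" where
  "Const c = Poly_Mapping.single 0 c"

abbreviation "a0 \<equiv> Var A0"
abbreviation "a1 \<equiv> Var A1"
abbreviation "a2 \<equiv> Var A2"

definition subst :: "(var \<Rightarrow> 'a::comm_ring_1 mpoly3) \<Rightarrow> 'a mpoly3 \<Rightarrow> 'a mpoly3" where
  "subst s f = (\<Sum>m::monom\<in>Poly_Mapping.keys f. Const (Poly_Mapping.lookup f m) *
       (s A0 ^ Poly_Mapping.lookup m A0 * s A1 ^ Poly_Mapping.lookup m A1 * s A2 ^ Poly_Mapping.lookup m A2))"

definition sigma_act :: "'a::comm_ring_1 \<Rightarrow> var \<Rightarrow> 'a mpoly3" where
  "sigma_act c v = (case v of
      A0 \<Rightarrow> a0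
    | A1 \<Rightarrow> a1 + Const c * a0
    | A2 \<Rightarrow> a2 + Const (2 * c) * a1 + Const (c ^ 2) * a0)"

definition Fq :: "nat \<Rightarrow> 'a::field set" where
  "Fq q = {c. c ^ q = c}"

definition invariants_P :: "nat \<Rightarrow> 'a::field mpoly3 set" where
  "invariants_P q = {f. \<forall>c\<in>Fq q. subst (sigma_act c) f = f}"

definition Delta :: "'a::comm_ring_1 mpoly3" where
  "Delta = a1 ^ 2 - a0 * a2"

definition beta_inv :: "nat \<Rightarrow> 'a::field mpoly3" where
  "beta_inv q = (\<Prod>c\<in>Fq q. a1 + Const c * a0)"

definition gamma_inv :: "nat \<Rightarrow> 'a::field \<Rightarrow> 'a mpoly3" where
  "gamma_inv q k = (\<Prod>c\<in>Fq q. a2 + Const (2 * c) * a1 + Const (c ^ 2 - k) * a0)"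

inductive_set alg_gen :: "'a::comm_ring_1 mpoly3 set \<Rightarrow> 'a mpoly3 set" for S where
  const: "Const c \<in> alg_gen S"
| gen: "f \<in> S \<Longrightarrow> f \<in> alg_gen S"
| add: "f \<in> alg_gen S \<Longrightarrow> g \<in> alg_gen S \<Longrightarrow> f + g \<in> alg_gen S"
| mult: "f \<in> alg_gen S \<Longrightarrow> g \<in> alg_gen S \<Longrightarrow> f * g \<in> alg_gen S"

definition tdeg :: "monom \<Rightarrow> nat" where
  "tdeg m = Poly_Mapping.lookup m A0 + Poly_Mapping.lookup m A1 + Poly_Mapping.lookup m A2"

definition grevlex_less :: "monom \<Rightarrow> monom \<Rightarrow> bool" where
  "grevlex_less m m' \<longleftrightarrow>
     tdeg m < tdeg m' \<or>
     (tdeg m = tdeg m' \<and>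
       (Poly_Mapping.lookup m A0 > Poly_Mapping.lookup m' A0 \<or>
        (Poly_Mapping.lookup m A0 = Poly_Mapping.lookup m' A0 \<and> Poly_Mapping.lookup m A1 > Poly_Mapping.lookup m' A1)))"

definition lead_monom :: "'a::zero mpoly3 \<Rightarrow> monom" where
  "lead_monom f = (THE m. m \<in> Poly_Mapping.keys f \<and> (\<forall>m'\<in>Poly_Mapping.keys f. m' \<noteq> m \<longrightarrow> grevlex_less m' m))"

text \<open>Monoid (of monomials) generated by a set of monomials; its elements are
  exactly the monomials of the monomial algebra generated.\<close>
inductive_set monoid_gen :: "monom set \<Rightarrow> monom set" for S where
  unit: "0 \<in> monoid_gen S"
| gen: "m \<in> S \<Longrightarrow> m \<in> monoid_gen S"
| mult: "m \<in> monoid_gen S \<Longrightarrow> m' \<in> monoid_gen S \<Longrightarrow> m + m' \<in> monoid_gen S"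

definition sagbi_basis :: "'a::comm_ring_1 mpoly3 set \<Rightarrow> 'a mpoly3 set \<Rightarrow> bool" where
  "sagbi_basis B R \<longleftrightarrow> B \<subseteq> R \<and>
     lead_monom ` (R - {0}) = monoid_gen (lead_monom ` (B - {0}))"

end

theory Submission
  imports Defs "HOL-Computational_Algebra.Polynomial" "HOL-Library.Product_Lexorder"
begin

text \<open>Every \<open>\<sigma>\<^sub>c\<close> fixes \<open>a0, \<Delta>, \<beta>, \<gamma>\<^sub>0\<close>, and these satisfy
  \<open>\<beta>^2 = a0^q \<gamma>\<^sub>0 + \<Delta>^q - 2 a0^(q-1) \<Delta>^((q+1)/2) + a0^(2(q-1)) \<Delta>\<close>. Indeed
  \<open>\<Delta> - (a1 + c a0)^2 = -a0 (a2 + 2c a1 + c^2 a0)\<close>, so \<open>\<Prod>\<^sub>c (X - (a1 + c a0)^2)\<close> takes the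
  value \<open>-a0^q \<gamma>\<^sub>0\<close> at \<open>X = \<Delta>\<close>; and since \<open>\<beta> = r^q - a0^(q-1) r\<close> for each \<open>r = a1 + c a0\<close>,
  the polynomial \<open>\<beta>^2 - X^q + 2 a0^(q-1) X^((q+1)/2) - a0^(2(q-1)) X\<close>, formally
  \<open>\<beta>^2 - (X^(q/2) - a0^(q-1) X^(1/2))^2\<close>, vanishes at the \<open>q\<close> points \<open>r^2\<close> and so equals
  \<open>-\<Prod>\<^sub>c (X - (a1 + c a0)^2)\<close>.
  Hence the algebra generated by the four invariants is spanned by the monomials
  \<open>a0^i \<Delta>^b \<beta>^e \<gamma>\<^sub>0^g\<close> with \<open>e \<le> 1\<close>, whose lead monomials \<open>a0^i a1^(2b+eq) a2^(qg)\<close> are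
  pairwise distinct; so its lead monomials form the monoid generated by those of the generators.

  Conversely, \<open>a0^N f\<close> lies in that algebra for every invariant \<open>f\<close> and some \<open>N\<close>: viewing \<open>f\<close>
  as a polynomial in \<open>a2\<close>, its leading coefficient is an invariant of \<open>F[a0,a1]\<close>, hence a
  polynomial in \<open>a0\<close> and \<open>\<beta>\<close>, and after multiplying by a power of \<open>a0\<close> it can be cancelled
  against a power of \<open>-\<Delta> = a0 a2 - a1^2\<close>. Multiplication by \<open>a0\<close> does not leave the monoid
  above, so the lead monomial of every invariant lies in it, and subduction shows that every
  invariant lies in the algebra.\<close>

abbreviation lookup :: "('b \<Rightarrow>\<^sub>0 'c::zero) \<Rightarrow> 'b \<Rightarrow> 'c" where "lookup \<equiv> Poly_Mapping.lookup"
abbreviation keys :: "('b \<Rightarrow>\<^sub>0 'c::zero) \<Rightarrow> 'b set" where "keys \<equiv> Poly_Mapping.keys"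
abbreviation single :: "'b \<Rightarrow> 'c::zero \<Rightarrow> 'b \<Rightarrow>\<^sub>0 'c" where "single \<equiv> Poly_Mapping.single"

lemma monom_eqI:
  "lookup m A0 = lookup m' A0 \<Longrightarrow> lookup m A1 = lookup m' A1 \<Longrightarrow> lookup m A2 = lookup m' A2
    \<Longrightarrow> (m::monom) = m'"
  by (rule poly_mapping_eqI) (case_tac k, auto)

lemma monom_eq_sum_singles:
  "(m::monom) = single A0 (lookup m A0) + single A1 (lookup m A1) + single A2 (lookup m A2)"
  by (rule monom_eqI) (simp_all add: lookup_add lookup_single)

lemma mpoly_expansion: "(f::'a::comm_ring_1 mpoly3) = (\<Sum>m\<in>keys f. single m (lookup f m))"
  by (rule poly_mapping_eqI) (auto simp: lookup_sum lookup_single when_def in_keys_iff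
      intro: sum.neutral split: if_splits cong: sum.cong)

lemma mpoly_mult_expansion:
  "(f::'a::comm_ring_1 mpoly3) * g = (\<Sum>m\<in>keys f. \<Sum>m'\<in>keys g. single (m + m') (lookup f m * lookup g m'))"
proof -
  have "f * g = (\<Sum>m\<in>keys f. single m (lookup f m)) * (\<Sum>m'\<in>keys g. single m' (lookup g m'))"
    by (subst (1) mpoly_expansion, subst (2) mpoly_expansion) (rule refl)
  thus ?thesis by (simp add: sum_product mult_single)
qed

locale comm_ring_hom =
  fixes hom :: "'a::comm_ring_1 \<Rightarrow> 'b::comm_ring_1"
  assumes hom_0: "hom 0 = 0" and hom_1: "hom 1 = 1"
    and hom_add: "hom (x + y) = hom x + hom y" and hom_mult: "hom (x * y) = hom x * hom y"
begin

lemma hom_uminus: "hom (- x) = - hom x"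
  using hom_add[of x "-x"] by (simp add: hom_0 add_eq_0_iff2)

lemma hom_diff: "hom (x - y) = hom x - hom y"
  using hom_add[of x "-y"] by (simp add: hom_uminus)

lemma hom_power: "hom (x ^ n) = hom x ^ n"
  by (induction n) (simp_all add: hom_1 hom_mult)

lemma hom_numeral: "hom (numeral n) = numeral n"
  by (induction n) (simp_all only: numeral_One numeral_Bit0 numeral_Bit1 hom_add hom_1)

lemma hom_sum: "hom (\<Sum>i\<in>I. g i) = (\<Sum>i\<in>I. hom (g i))"
  by (induction I rule: infinite_finite_induct) (auto simp: hom_0 hom_add)

lemma hom_prod: "hom (\<Prod>i\<in>I. g i) = (\<Prod>i\<in>I. hom (g i))"
  by (induction I rule: infinite_finite_induct) (auto simp: hom_1 hom_mult)

lemma map_poly_hom: "comm_ring_hom (map_poly hom)"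
  by unfold_locales
    (auto intro!: poly_eqI simp: coeff_map_poly hom_0 hom_1 hom_add hom_mult coeff_mult hom_sum)

end

definition eval_monom :: "(var \<Rightarrow> 'b::comm_semiring_1) \<Rightarrow> monom \<Rightarrow> 'b" where
  "eval_monom s m = s A0 ^ lookup m A0 * s A1 ^ lookup m A1 * s A2 ^ lookup m A2"

definition eval_mpoly :: "('a::comm_ring_1 \<Rightarrow> 'b::comm_ring_1) \<Rightarrow> (var \<Rightarrow> 'b) \<Rightarrow> 'a mpoly3 \<Rightarrow> 'b" where
  "eval_mpoly e s f = (\<Sum>m\<in>keys f. e (lookup f m) * eval_monom s m)"

lemma subst_eq_eval_mpoly: "subst s f = eval_mpoly Const s f"
  by (simp add: subst_def eval_mpoly_def eval_monom_def)

lemma eval_monom_add: "eval_monom s (m + m') = eval_monom s m * eval_monom s m'"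
  by (simp add: eval_monom_def lookup_add power_add algebra_simps)

lemma eval_mpoly_zero [simp]: "eval_mpoly e s 0 = 0"
  by (simp add: eval_mpoly_def)

context comm_ring_hom
begin

lemma eval_mpoly_superset:
  "finite S \<Longrightarrow> keys f \<subseteq> S \<Longrightarrow> eval_mpoly hom s f = (\<Sum>m\<in>S. hom (lookup f m) * eval_monom s m)"
  unfolding eval_mpoly_def by (intro sum.mono_neutral_left) (auto simp: in_keys_iff hom_0)

lemma eval_mpoly_add: "eval_mpoly hom s (f + g) = eval_mpoly hom s f + eval_mpoly hom s g"
proof -
  let ?S = "keys f \<union> keys g"
  have "eval_mpoly hom s (f + g) = (\<Sum>m\<in>?S. hom (lookup (f + g) m) * eval_monom s m)"
    using keys_add[of f g] by (intro eval_mpoly_superset) auto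
  also have "\<dots> = (\<Sum>m\<in>?S. hom (lookup f m) * eval_monom s m) + (\<Sum>m\<in>?S. hom (lookup g m) * eval_monom s m)"
    by (simp add: lookup_add hom_add sum.distrib algebra_simps)
  also have "\<dots> = eval_mpoly hom s f + eval_mpoly hom s g"
    by (subst (1 2) eval_mpoly_superset[of ?S]) auto
  finally show ?thesis .
qed

lemma eval_mpoly_sum: "eval_mpoly hom s (\<Sum>i\<in>I. g i) = (\<Sum>i\<in>I. eval_mpoly hom s (g i))"
  by (induction I rule: infinite_finite_induct) (auto simp: eval_mpoly_add)

lemma eval_mpoly_single: "eval_mpoly hom s (single m c) = hom c * eval_monom s m"
  by (cases "c = 0") (simp_all add: eval_mpoly_def hom_0)

lemma eval_mpoly_mult: "eval_mpoly hom s (f * g) = eval_mpoly hom s f * eval_mpoly hom s g"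
proof -
  have "eval_mpoly hom s (f * g) = (\<Sum>m\<in>keys f. \<Sum>m'\<in>keys g.
      hom (lookup f m) * eval_monom s m * (hom (lookup g m') * eval_monom s m'))"
    by (simp add: mpoly_mult_expansion[of f g] eval_mpoly_sum eval_mpoly_single hom_mult
        eval_monom_add algebra_simps)
  also have "\<dots> = eval_mpoly hom s f * eval_mpoly hom s g"
    by (simp add: eval_mpoly_def sum_product)
  finally show ?thesis .
qed

lemma eval_mpoly_hom: "comm_ring_hom (eval_mpoly hom s)"
proof unfold_locales
  show "eval_mpoly hom s 1 = 1"
    using eval_mpoly_single[of s 0 1] by (simp add: eval_monom_def hom_1)
qed (simp_all add: eval_mpoly_add eval_mpoly_mult)

lemma eval_mpoly_Const: "eval_mpoly hom s (Const c) = hom c"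
  by (simp add: Const_def eval_mpoly_single eval_monom_def)

lemma eval_mpoly_Var: "eval_mpoly hom s (Var v) = s v"
  by (cases v) (simp_all add: Var_def eval_mpoly_single hom_1 eval_monom_def lookup_single)

end

lemma Const_hom: "comm_ring_hom (Const :: 'a::comm_ring_1 \<Rightarrow> 'a mpoly3)"
  by unfold_locales (simp_all add: Const_def single_add mult_single)

interpretation Const: comm_ring_hom "Const :: 'a::comm_ring_1 \<Rightarrow> 'a mpoly3"
  by (rule Const_hom)

lemma Var_power: "(Var v :: 'a::comm_ring_1 mpoly3) ^ n = single (single v n) 1"
  by (induction n) (simp_all add: Var_def mult_single flip: single_add)

lemma single_eq_Const_mult_eval_monom: "(single m c :: 'a::comm_ring_1 mpoly3) = Const c * eval_monom Var m"
proof -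
  have "single m c = Const c * (single (single A0 (lookup m A0)) 1 * single (single A1 (lookup m A1)) 1
      * single (single A2 (lookup m A2)) 1)"
    by (subst monom_eq_sum_singles) (simp add: Const_def mult_single)
  thus ?thesis by (simp add: eval_monom_def Var_power)
qed

lemma comm_ring_hom_eq_eval_mpoly:
  assumes "comm_ring_hom (h :: 'a::comm_ring_1 mpoly3 \<Rightarrow> 'b::comm_ring_1)"
  shows "h f = eval_mpoly (h \<circ> Const) (h \<circ> Var) f"
proof -
  interpret h: comm_ring_hom h by (rule assms)
  have "h f = h (\<Sum>m\<in>keys f. single m (lookup f m))"
    by (subst mpoly_expansion) (rule refl)
  also have "\<dots> = (\<Sum>m\<in>keys f. h (Const (lookup f m)) * eval_monom (h \<circ> Var) m)"
    by (simp add: h.hom_sum single_eq_Const_mult_eval_monom h.hom_mult h.hom_power eval_monom_def)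
  finally show ?thesis by (simp add: eval_mpoly_def)
qed

lemma subst_hom: "comm_ring_hom (subst s :: 'a::comm_ring_1 mpoly3 \<Rightarrow> _)"
  unfolding subst_eq_eval_mpoly[abs_def] by (rule Const.eval_mpoly_hom)

section \<open>Lead monomials\<close>

text \<open>\<open>grevlex_less\<close> is the lexicographic order on this key, which exhibits it as a
  well-founded linear order compatible with addition of monomials.\<close>
definition grevlex_key :: "monom \<Rightarrow> nat \<times> nat \<times> nat" where
  "grevlex_key m = (tdeg m, tdeg m - lookup m A0, tdeg m - lookup m A1)"

lemma grevlex_less_iff_key: "grevlex_less m m' \<longleftrightarrow> grevlex_key m < grevlex_key m'"
  unfolding grevlex_less_def grevlex_key_def tdeg_def by auto

lemma grevlex_key_inj: "grevlex_key m = grevlex_key m' \<Longrightarrow> m = m'"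
  unfolding grevlex_key_def tdeg_def by (intro monom_eqI) auto

lemma grevlex_key_add_less:
  "grevlex_key m < grevlex_key m' \<Longrightarrow> grevlex_key (m + n) < grevlex_key (m' + n)"
  unfolding grevlex_key_def tdeg_def by (auto simp: lookup_add)

lemma grevlex_key_add_le:
  "grevlex_key m \<le> grevlex_key m' \<Longrightarrow> grevlex_key (m + n) \<le> grevlex_key (m' + n)"
  using grevlex_key_add_less[of m m' n] grevlex_key_inj[of m m'] by (auto simp: order_le_less)

lemma grevlex_key_add_less_pair:
  assumes "grevlex_key m \<le> grevlex_key a" "grevlex_key m' \<le> grevlex_key b" "(m, m') \<noteq> (a, b)"
  shows "grevlex_key (m + m') < grevlex_key (a + b)"
proof (cases "m = a")
  case True
  hence "grevlex_key m' < grevlex_key b"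
    using assms(2,3) grevlex_key_inj by (auto simp: order_le_less)
  thus ?thesis using True grevlex_key_add_less[of m' b a] by (simp add: add.commute)
next
  case False
  hence "grevlex_key (m + m') < grevlex_key (a + m')"
    using assms(1) grevlex_key_inj by (intro grevlex_key_add_less) (auto simp: order_le_less)
  also have "\<dots> \<le> grevlex_key (a + b)"
    using grevlex_key_add_le[OF assms(2), of a] by (simp add: add.commute)
  finally show ?thesis .
qed

lemma lead_monom_in_keys_and_max:
  assumes "f \<noteq> 0"
  shows "lead_monom f \<in> keys f \<and> (\<forall>m\<in>keys f. grevlex_key m \<le> grevlex_key (lead_monom f))"
proof -
  have fin: "finite (grevlex_key ` keys f)" and ne: "grevlex_key ` keys f \<noteq> {}" using assms by auto
  obtain m0 where m0: "m0 \<in> keys f" "grevlex_key m0 = Max (grevlex_key ` keys f)"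
    using Max_in[OF fin ne] by auto
  have le: "\<forall>m\<in>keys f. grevlex_key m \<le> grevlex_key m0" using m0 fin by auto
  have P: "m0 \<in> keys f \<and> (\<forall>m'\<in>keys f. m' \<noteq> m0 \<longrightarrow> grevlex_less m' m0)"
    using m0 le grevlex_key_inj by (force simp: grevlex_less_iff_key order_le_less)
  have "lead_monom f = m0" unfolding lead_monom_def
  proof (rule the_equality)
    fix m assume "m \<in> keys f \<and> (\<forall>m'\<in>keys f. m' \<noteq> m \<longrightarrow> grevlex_less m' m)"
    with P show "m = m0" by (metis grevlex_less_iff_key less_asym)
  qed (rule P)
  with m0 le show ?thesis by simp
qed

lemma lead_monom_in_keys: "f \<noteq> 0 \<Longrightarrow> lead_monom f \<in> keys f"
  using lead_monom_in_keys_and_max by blast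

lemma lead_monom_max: "m \<in> keys f \<Longrightarrow> grevlex_key m \<le> grevlex_key (lead_monom f)"
  using lead_monom_in_keys_and_max[of f] by (cases "f = 0") auto

lemma lead_monom_eqI:
  assumes "m \<in> keys f" "\<And>m'. m' \<in> keys f \<Longrightarrow> grevlex_key m' \<le> grevlex_key m"
  shows "lead_monom f = m"
proof -
  have "f \<noteq> 0" using assms(1) by auto
  hence "grevlex_key (lead_monom f) \<le> grevlex_key m" using assms(2) lead_monom_in_keys by blast
  with lead_monom_max[OF assms(1)] show ?thesis using grevlex_key_inj by (metis order_antisym)
qed

lemma lead_monom_eqI':
  assumes "keys f \<subseteq> S" "lookup f m \<noteq> 0" "\<And>m'. m' \<in> S \<Longrightarrow> grevlex_key m' \<le> grevlex_key m"
  shows "lead_monom f = m"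
  using assms by (intro lead_monom_eqI) (auto simp: in_keys_iff)

lemma lead_monom_one: "lead_monom (1::'a::comm_ring_1 mpoly3) = 0"
  by (rule lead_monom_eqI) (auto simp: in_keys_iff)

definition lcoeff :: "'a::zero mpoly3 \<Rightarrow> 'a" where
  "lcoeff f = lookup f (lead_monom f)"

lemma lcoeff_nonzero: "f \<noteq> 0 \<Longrightarrow> lcoeff f \<noteq> 0"
  unfolding lcoeff_def using lead_monom_in_keys by (auto simp: in_keys_iff)

lemma lookup_mult_lead_monoms:
  fixes f g :: "'a::comm_ring_1 mpoly3"
  assumes f: "f \<noteq> 0" and g: "g \<noteq> 0"
  shows "lookup (f * g) (lead_monom f + lead_monom g) = lcoeff f * lcoeff g"
proof -
  let ?a = "lead_monom f" and ?b = "lead_monom g"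
  have "lookup (f * g) (?a + ?b)
      = (\<Sum>m\<in>keys f. \<Sum>m'\<in>keys g. if m = ?a \<and> m' = ?b then lookup f m * lookup g m' else 0)"
    unfolding mpoly_mult_expansion[of f g] lookup_sum
  proof (intro sum.cong refl)
    fix m m' assume "m \<in> keys f" "m' \<in> keys g"
    hence "grevlex_key m \<le> grevlex_key ?a" "grevlex_key m' \<le> grevlex_key ?b"
      by (simp_all add: lead_monom_max)
    hence "m + m' = ?a + ?b \<longleftrightarrow> m = ?a \<and> m' = ?b"
      using grevlex_key_add_less_pair[of m ?a m' ?b] by (cases "m = ?a \<and> m' = ?b") auto
    thus "lookup (single (m + m') (lookup f m * lookup g m')) (?a + ?b)
        = (if m = ?a \<and> m' = ?b then lookup f m * lookup g m' else 0)"
      by (simp add: lookup_single when_def)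
  qed
  also have "\<dots> = (\<Sum>m\<in>keys f. if m = ?a then lookup f m * lookup g ?b else 0)"
    using lead_monom_in_keys[OF g] by (intro sum.cong refl) (case_tac "x = ?a", simp_all)
  also have "\<dots> = lcoeff f * lcoeff g"
    using lead_monom_in_keys[OF f] by (simp add: lcoeff_def)
  finally show ?thesis .
qed

lemma keys_mult_below_lead_monoms:
  "m \<in> keys (f * g) \<Longrightarrow> grevlex_key m \<le> grevlex_key (lead_monom f + lead_monom g)"
proof -
  assume "m \<in> keys (f * g)"
  then obtain x y where "m = x + y" "x \<in> keys f" "y \<in> keys g" using keys_mult by blast
  thus ?thesis
    using grevlex_key_add_less_pair[of x "lead_monom f" y "lead_monom g"]
      lead_monom_max[of x f] lead_monom_max[of y g]
    by (cases "(x, y) = (lead_monom f, lead_monom g)") (auto intro: less_imp_le)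
qed

lemma lead_monom_mult:
  fixes f g :: "'a::field mpoly3"
  assumes f: "f \<noteq> 0" and g: "g \<noteq> 0"
  shows "f * g \<noteq> 0" "lead_monom (f * g) = lead_monom f + lead_monom g"
proof -
  have nz: "lookup (f * g) (lead_monom f + lead_monom g) \<noteq> 0"
    using lookup_mult_lead_monoms[OF f g] lcoeff_nonzero[OF f] lcoeff_nonzero[OF g] by simp
  thus "f * g \<noteq> 0" by auto
  show "lead_monom (f * g) = lead_monom f + lead_monom g"
    using nz keys_mult_below_lead_monoms by (intro lead_monom_eqI) (auto simp: in_keys_iff)
qed

lemma lead_monom_power:
  fixes f :: "'a::field mpoly3"
  assumes "f \<noteq> 0"
  shows "f ^ k \<noteq> 0 \<and> lookup (lead_monom (f ^ k)) v = k * lookup (lead_monom f) v"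
  by (induction k) (simp_all add: lead_monom_one lead_monom_mult[OF assms] lookup_add)

lemma lead_monom_prod:
  fixes g :: "'b \<Rightarrow> 'a::field mpoly3"
  assumes "finite I" "\<And>i. i \<in> I \<Longrightarrow> g i \<noteq> 0"
  shows "(\<Prod>i\<in>I. g i) \<noteq> 0 \<and> lead_monom (\<Prod>i\<in>I. g i) = (\<Sum>i\<in>I. lead_monom (g i))"
  using assms
  by (induction I rule: finite_induct) (simp_all add: lead_monom_one lead_monom_mult)

lemma lookup_Const_mult: "lookup (Const c * f) m = c * lookup f m"
  by (simp add: Const_def flip: mult_map_scale_conv_mult add: map.rep_eq when_def)

lemma keys_Const_mult: "keys (Const c * f) \<subseteq> keys f"
  by (auto simp: in_keys_iff lookup_Const_mult)

lemma keys_Const_mult_eq: "c \<noteq> 0 \<Longrightarrow> keys (Const (c::'a::field) * f) = keys f"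
  by (auto simp: in_keys_iff lookup_Const_mult)

lemma lead_monom_Const_mult:
  assumes "c \<noteq> 0" shows "lead_monom (Const (c::'a::field) * f) = lead_monom f"
proof (cases "f = 0")
  case False
  thus ?thesis using lead_monom_in_keys[OF False] lead_monom_max[of _ f]
    by (intro lead_monom_eqI) (simp_all add: keys_Const_mult_eq[OF assms])
qed simp

lemma lead_monom_add_below:
  fixes f g :: "'a::comm_ring_1 mpoly3"
  assumes f: "f \<noteq> 0" and g: "\<And>m. m \<in> keys g \<Longrightarrow> grevlex_key m < grevlex_key (lead_monom f)"
  shows "lead_monom (f + g) = lead_monom f"
proof (rule lead_monom_eqI)
  have "lookup g (lead_monom f) = 0" using g by (auto simp: in_keys_iff)
  thus "lead_monom f \<in> keys (f + g)"
    using lcoeff_nonzero[OF f] by (simp add: in_keys_iff lookup_add lcoeff_def)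
  fix m assume "m \<in> keys (f + g)"
  hence "m \<in> keys f \<or> m \<in> keys g" using keys_add[of f g] by blast
  thus "grevlex_key m \<le> grevlex_key (lead_monom f)" using lead_monom_max g by (auto intro: less_imp_le)
qed

lemma subduction_step:
  fixes f h :: "'a::field mpoly3"
  assumes f: "f \<noteq> 0" and h: "h \<noteq> 0" and eq: "lead_monom h = lead_monom f"
    and g: "g = f - Const (lcoeff f / lcoeff h) * h" "g \<noteq> 0"
  shows "grevlex_key (lead_monom g) < grevlex_key (lead_monom f)"
proof -
  have "lookup g (lead_monom f) = 0"
    using lcoeff_nonzero[OF h] by (simp add: g lookup_minus lookup_Const_mult lcoeff_def eq)
  moreover have "grevlex_key m \<le> grevlex_key (lead_monom f)" if "m \<in> keys g" for m
  proof -
    have "m \<in> keys f \<union> keys h" using that keys_Const_mult[of "lcoeff f / lcoeff h" h]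
      by (auto simp: g in_keys_iff lookup_minus lookup_Const_mult)
    thus ?thesis using lead_monom_max[of m f] lead_monom_max[of m h] eq by auto
  qed
  ultimately have "grevlex_key (lead_monom g) \<le> grevlex_key (lead_monom f)"
    "lead_monom g \<noteq> lead_monom f"
    using lead_monom_in_keys[OF g(2)] by (auto simp: in_keys_iff)
  thus ?thesis using grevlex_key_inj by (auto simp: order_le_less)
qed

lemma wf_grevlex_lead_monom:
  "wf (inv_image {(m, m'). grevlex_key m < grevlex_key m'} (lead_monom :: 'a::zero mpoly3 \<Rightarrow> monom))"
proof -
  have "wf (inv_image {(x, y). x < y} grevlex_key)" by (intro wf_inv_image wf)
  thus ?thesis by (intro wf_inv_image) (simp add: inv_image_def)
qed

lemma single_one_eq_iff [simp]: "single v (Suc 0) = single w (Suc 0) \<longleftrightarrow> v = w"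
proof
  assume "single v (Suc 0) = single w (Suc 0)"
  hence "lookup (single v (Suc 0)) v = lookup (single w (Suc 0)) v" by simp
  thus "v = w" by (cases "v = w") (auto simp: lookup_single)
qed simp

lemma lead_monom_linear:
  fixes b c :: "'a::field"
  shows "lead_monom (a1 + Const c * a0) = single A1 1" "a1 + Const c * a0 \<noteq> 0"
    and "lead_monom (a2 + Const b * a1 + Const c * a0) = single A2 1"
      "a2 + Const b * a1 + Const c * a0 \<noteq> 0"
proof -
  have keys_CVar: "keys (Const c * Var v) \<subseteq> {single v 1}" for c :: 'a and v
    using keys_Const_mult[of c "Var v"] by (simp add: Var_def)
  have k1: "keys (a1 + Const c * a0) \<subseteq> {single A1 1, single A0 1}"
    using keys_add[of a1 "Const c * a0"] keys_CVar[of c A0] by (auto simp: Var_def)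
  have l1: "lookup (a1 + Const c * a0) (single A1 1) = 1"
    by (simp add: lookup_add lookup_Const_mult Var_def lookup_single)
  have k2: "keys (a2 + Const b * a1 + Const c * a0) \<subseteq> {single A2 1, single A1 1, single A0 1}"
    using keys_add[of "a2 + Const b * a1" "Const c * a0"] keys_add[of a2 "Const b * a1"]
      keys_CVar[of b A1] keys_CVar[of c A0] by (auto simp: Var_def)
  have l2: "lookup (a2 + Const b * a1 + Const c * a0) (single A2 1) = 1"
    by (simp add: lookup_add lookup_Const_mult Var_def lookup_single)
  have key: "grevlex_key (single A0 1) = (1,0,1)" "grevlex_key (single A1 1) = (1,1,0)"
    "grevlex_key (single A2 1) = (1,1,1)"
    by (simp_all add: grevlex_key_def tdeg_def lookup_single)
  show "lead_monom (a1 + Const c * a0) = single A1 1"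
    by (rule lead_monom_eqI'[OF k1]) (use l1 key in auto)
  show "lead_monom (a2 + Const b * a1 + Const c * a0) = single A2 1"
    by (rule lead_monom_eqI'[OF k2]) (use l2 key in auto)
  show "a1 + Const c * a0 \<noteq> 0" "a2 + Const b * a1 + Const c * a0 \<noteq> 0"
    using l1 l2 by auto
qed

lemma lead_monom_a0: "lead_monom (a0 :: 'a::field mpoly3) = single A0 1" "(a0 :: 'a mpoly3) \<noteq> 0"
  by (auto intro!: lead_monom_eqI simp: Var_def)
    (metis single_zero one_neq_zero lookup_single_eq lookup_zero)

lemma lead_monom_Delta: "lead_monom (Delta :: 'a::field mpoly3) = single A1 2" "(Delta :: 'a mpoly3) \<noteq> 0"
proof -
  have ne: "single A1 (2::nat) \<noteq> single A0 1 + single A2 1"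
  proof
    assume "single A1 (2::nat) = single A0 1 + single A2 1"
    hence "lookup (single A1 (2::nat)) A1 = lookup (single A0 1 + single A2 (1::nat)) A1" by simp
    thus False by (simp add: lookup_add lookup_single)
  qed
  have "(a0 :: 'a mpoly3) * a2 = single (single A0 1 + single A2 1) 1"
    by (simp add: Var_def mult_single)
  hence D: "(Delta :: 'a mpoly3) = single (single A1 2) 1 - single (single A0 1 + single A2 1) 1"
    by (simp add: Delta_def Var_power)
  have l: "lookup (Delta :: 'a mpoly3) (single A1 2) = 1"
    using ne by (simp add: D lookup_minus lookup_single)
  have k: "keys (Delta :: 'a mpoly3) \<subseteq> {single A1 2, single A0 1 + single A2 1}"
    by (auto simp: D in_keys_iff lookup_minus lookup_single when_def split: if_splits)
  have "grevlex_key (single A1 2) = (2,2,0)" "grevlex_key (single A0 1 + single A2 1) = (2,1,2)"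
    by (simp_all add: grevlex_key_def tdeg_def lookup_single lookup_add)
  with k l show "lead_monom (Delta :: 'a mpoly3) = single A1 2"
    by (auto intro!: lead_monom_eqI')
  show "(Delta :: 'a mpoly3) \<noteq> 0" using l by auto
qed

lemma sum_single_const: "(\<Sum>i\<in>I. single v (k::nat)) = single v (card I * k)"
  by (rule poly_mapping_eqI) (simp add: lookup_sum lookup_single when_def)

lemma lead_monom_beta:
  assumes "finite (Fq q :: 'a::field set)"
  shows "lead_monom (beta_inv q :: 'a mpoly3) = single A1 (card (Fq q :: 'a set))"
    "(beta_inv q :: 'a mpoly3) \<noteq> 0"
  using lead_monom_prod[OF assms, of "\<lambda>c. a1 + Const c * a0"]
  by (simp_all add: beta_inv_def lead_monom_linear sum_single_const)

lemma lead_monom_gamma: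
  assumes "finite (Fq q :: 'a::field set)"
  shows "lead_monom (gamma_inv q k :: 'a mpoly3) = single A2 (card (Fq q :: 'a set))"
    "(gamma_inv q k :: 'a mpoly3) \<noteq> 0"
  using lead_monom_prod[OF assms, of "\<lambda>c. a2 + Const (2 * c) * a1 + Const (c^2 - k) * a0"]
  by (simp_all add: gamma_inv_def lead_monom_linear sum_single_const)

section \<open>The tower \<open>F[a0][a1][a2]\<close>\<close>

text \<open>To argue degree-wise in \<open>a2\<close> (and then in \<open>a1\<close>), polynomials are transported into the
  univariate tower: the outer variable is \<open>a2\<close>, the middle one \<open>a1\<close>, the inner one \<open>a0\<close>.\<close>
type_synonym 'a poly3 = "'a poly poly poly"

definition const3 :: "'a::comm_ring_1 \<Rightarrow> 'a poly3" where
  "const3 c = [:[:[:c:]:]:]"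

definition var3 :: "var \<Rightarrow> 'a::comm_ring_1 poly3" where
  "var3 v = (case v of A0 \<Rightarrow> [:[:[:0, 1:]:]:] | A1 \<Rightarrow> [:[:0, 1:]:] | A2 \<Rightarrow> [:0, 1:])"

definition to_poly3 :: "'a::comm_ring_1 mpoly3 \<Rightarrow> 'a poly3" where
  "to_poly3 = eval_mpoly const3 var3"

lemma const_poly_hom: "comm_ring_hom (\<lambda>u::'a::comm_ring_1. [:u:])"
  by unfold_locales (simp_all add: pCons_one)

interpretation const_poly: comm_ring_hom "\<lambda>u::'a::comm_ring_1. [:u:]"
  by (rule const_poly_hom)

lemma const3_hom: "comm_ring_hom (const3 :: 'a::comm_ring_1 \<Rightarrow> 'a poly3)"
  by unfold_locales (simp_all add: const3_def pCons_one)

interpretation const3: comm_ring_hom "const3 :: 'a::comm_ring_1 \<Rightarrow> 'a poly3"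
  by (rule const3_hom)

interpretation to_poly3: comm_ring_hom "to_poly3 :: 'a::comm_ring_1 mpoly3 \<Rightarrow> 'a poly3"
  unfolding to_poly3_def by (rule const3.eval_mpoly_hom)

lemma to_poly3_Const: "to_poly3 (Const c) = const3 c"
  by (simp add: to_poly3_def const3.eval_mpoly_Const)

lemma to_poly3_Var: "to_poly3 (Var v) = var3 v"
  by (simp add: to_poly3_def const3.eval_mpoly_Var)

lemma coeff_to_poly3:
  "coeff (coeff (coeff (to_poly3 f) k) j) i = lookup f (single A0 i + single A1 j + single A2 k)"
proof -
  let ?m = "single A0 i + single A1 j + single A2 k"
  have monomial: "const3 c * eval_monom var3 m
      = monom (monom (monom c (lookup m A0)) (lookup m A1)) (lookup m A2)" for c m
  proof -
    have e: "var3 A0 = monom (monom (monom 1 1) 0) 0" "var3 A1 = monom (monom 1 1) 0"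
      "var3 A2 = monom 1 1" "const3 c = monom (monom (monom c 0) 0) 0"
      by (simp_all add: var3_def const3_def monom_0 monom_Suc)
    show ?thesis unfolding eval_monom_def e by (simp add: monom_power mult_monom)
  qed
  have "coeff (coeff (coeff (to_poly3 f) k) j) i = (\<Sum>m\<in>keys f. if m = ?m then lookup f m else 0)"
    unfolding to_poly3_def eval_mpoly_def monomial coeff_sum
  proof (intro sum.cong refl)
    fix m :: monom
    have "lookup m A2 = k \<and> lookup m A1 = j \<and> lookup m A0 = i \<longleftrightarrow> m = ?m"
      using monom_eqI[of m ?m] by (auto simp: lookup_add lookup_single)
    thus "coeff (coeff (coeff (monom (monom (monom (lookup f m) (lookup m A0)) (lookup m A1))
        (lookup m A2)) k) j) i = (if m = ?m then lookup f m else 0)"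
      by auto
  qed
  also have "\<dots> = lookup f ?m" by (simp add: in_keys_iff)
  finally show ?thesis .
qed

lemma to_poly3_inj: "to_poly3 f = to_poly3 g \<Longrightarrow> f = g"
proof (rule poly_mapping_eqI)
  fix m :: monom
  assume "to_poly3 f = to_poly3 g"
  thus "lookup f m = lookup g m"
    using coeff_to_poly3[of f "lookup m A2" "lookup m A1" "lookup m A0"]
      coeff_to_poly3[of g "lookup m A2" "lookup m A1" "lookup m A0"] by (simp flip: monom_eq_sum_singles)
qed

text \<open>The action of \<open>\<sigma>\<^sub>c\<close> in the tower: \<open>shift_a1 c\<close> substitutes \<open>a1 + c a0\<close> for \<open>a1\<close> in
  \<open>F[a0][a1]\<close>, and \<open>sigma3 c\<close> additionally substitutes \<open>a2 + 2c a1 + c\<^sup>2 a0\<close> for \<open>a2\<close>.\<close>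
definition shift_a1 :: "'a::comm_ring_1 \<Rightarrow> 'a poly poly \<Rightarrow> 'a poly poly" where
  "shift_a1 c u = pcompose u [:[:0, c:], 1:]"

definition sigma3 :: "'a::comm_ring_1 \<Rightarrow> 'a poly3 \<Rightarrow> 'a poly3" where
  "sigma3 c P = pcompose (map_poly (shift_a1 c) P) [:[:[:0, c^2:], [:2 * c:]:], 1:]"

lemma shift_a1_hom: "comm_ring_hom (shift_a1 c)"
  by unfold_locales (simp_all add: shift_a1_def pcompose_add pcompose_mult pcompose_1)

lemma shift_a1_const [simp]: "shift_a1 c [:a:] = [:a:]"
  by (simp add: shift_a1_def)

lemma sigma3_hom: "comm_ring_hom (sigma3 c)"
proof -
  interpret map_shift: comm_ring_hom "map_poly (shift_a1 c)"
    by (rule comm_ring_hom.map_poly_hom[OF shift_a1_hom])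
  show ?thesis
    by unfold_locales (simp_all add: sigma3_def map_shift.hom_add map_shift.hom_mult
        map_shift.hom_1 pcompose_add pcompose_mult pcompose_1)
qed

lemma sigma3_const [simp]: "sigma3 c [:u:] = [:shift_a1 c u:]"
  by (simp add: sigma3_def map_poly_pCons shift_a1_def)

lemma to_poly3_subst_sigma: "to_poly3 (subst (sigma_act c) f) = sigma3 c (to_poly3 f)"
proof -
  interpret sigma3: comm_ring_hom "sigma3 c" by (rule sigma3_hom)
  interpret subst: comm_ring_hom "subst (sigma_act c)" by (rule subst_hom)
  have "comm_ring_hom (to_poly3 \<circ> subst (sigma_act c))"
    by unfold_locales (simp_all add: to_poly3.hom_add to_poly3.hom_mult to_poly3.hom_1
        to_poly3.hom_0 subst.hom_add subst.hom_mult subst.hom_1 subst.hom_0)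
  moreover have "comm_ring_hom (sigma3 c \<circ> to_poly3)"
    by unfold_locales (simp_all add: to_poly3.hom_add to_poly3.hom_mult to_poly3.hom_1
        to_poly3.hom_0 sigma3.hom_0 sigma3.hom_add sigma3.hom_mult sigma3.hom_1)
  moreover have "(to_poly3 \<circ> subst (sigma_act c)) \<circ> Const = (sigma3 c \<circ> to_poly3) \<circ> Const"
    by (rule ext) (simp add: subst_eq_eval_mpoly Const.eval_mpoly_Const to_poly3_Const const3_def
        shift_a1_def)
  moreover have "(to_poly3 \<circ> subst (sigma_act c)) \<circ> Var = (sigma3 c \<circ> to_poly3) \<circ> Var"
  proof
    fix v show "((to_poly3 \<circ> subst (sigma_act c)) \<circ> Var) v = ((sigma3 c \<circ> to_poly3) \<circ> Var) v"
      by (cases v) (simp_all add: subst_eq_eval_mpoly Const.eval_mpoly_Var sigma_act_def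
          to_poly3.hom_add to_poly3.hom_mult to_poly3_Const to_poly3_Var var3_def const3_def
          sigma3_def shift_a1_def map_poly_pCons pcompose_pCons pcompose_1)
  qed
  ultimately show ?thesis
    using comm_ring_hom_eq_eval_mpoly[of "to_poly3 \<circ> subst (sigma_act c)" f]
      comm_ring_hom_eq_eval_mpoly[of "sigma3 c \<circ> to_poly3" f] by simp
qed

lemma prod_linear_factors_dvd:
  fixes P :: "'b::idom poly"
  assumes "finite S" "\<And>x. x \<in> S \<Longrightarrow> poly P x = 0"
  shows "(\<Prod>x\<in>S. [:-x, 1:]) dvd P"
  using assms
proof (induction S arbitrary: P rule: finite_induct)
  case (insert x S)
  obtain P1 where P: "P = [:-x, 1:] * P1"
    using insert.prems poly_eq_0_iff_dvd by (metis dvdE insertI1)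
  have "poly P1 y = 0" if "y \<in> S" for y
  proof -
    have "(y - x) * poly P1 y = 0" using insert.prems[of y] that by (simp add: P algebra_simps)
    moreover have "y \<noteq> x" using insert.hyps that by auto
    ultimately show ?thesis by simp
  qed
  hence "(\<Prod>x\<in>S. [:-x, 1:]) dvd P1" using insert.IH by blast
  thus ?case unfolding P prod.insert[OF insert.hyps] by (rule mult_dvd_mono[OF dvd_refl])
qed simp

lemma poly_eq_smult_prod_roots:
  fixes g :: "'c \<Rightarrow> 'b::idom" and P :: "'b poly"
  assumes fin: "finite F" and inj: "inj_on g F" and roots: "\<And>c. c \<in> F \<Longrightarrow> poly P (g c) = 0"
    and deg: "degree P \<le> card F" and nz: "P \<noteq> 0"
  shows "P = smult (coeff P (card F)) (\<Prod>c\<in>F. [:-(g c), 1:])"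
proof -
  let ?R = "\<Prod>c\<in>F. [:-(g c), 1:]"
  have R: "?R = (\<Prod>x\<in>g ` F. [:-x, 1:])" by (simp add: prod.reindex[OF inj])
  have "?R dvd P" unfolding R by (rule prod_linear_factors_dvd) (use fin roots in auto)
  then obtain Q where Q: "P = ?R * Q" by (auto elim: dvdE)
  have dR: "degree ?R = card F" using fin by (simp add: degree_prod_sum_eq)
  have "lead_coeff ?R = 1" by (simp add: lead_coeff_prod)
  hence lR: "coeff ?R (card F) = 1" by (simp add: dR)
  have "Q \<noteq> 0" "?R \<noteq> 0" using nz Q by auto
  hence "degree Q = 0" using deg dR Q by (simp add: degree_mult_eq)
  then obtain k where k: "Q = [:k:]" by (metis degree_eq_zeroE)
  have ck: "coeff P (card F) = k" using lR by (simp add: Q k)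
  show ?thesis unfolding ck using Q k by (simp add: mult.commute)
qed

lemma prod_linear_factors_Frobenius:
  fixes \<phi> :: "'a::comm_ring_1 \<Rightarrow> 'b::idom" and y :: 'b
  assumes hom: "comm_ring_hom \<phi>" and inj: "inj \<phi>" and y: "y \<noteq> 0" and fin: "finite F"
    and card: "card F = q" and Fq: "\<And>c. c \<in> F \<Longrightarrow> c ^ q = c" and q: "q \<ge> 2"
  shows "(\<Prod>c\<in>F. [:-(\<phi> c * y), 1:]) = monom 1 q - [:0, y ^ (q - 1):]"
proof -
  interpret comm_ring_hom \<phi> by (rule hom)
  let ?R = "monom 1 q - [:0, y ^ (q - 1):]"
  have injF: "inj_on (\<lambda>c. \<phi> c * y) F"
    using inj y by (auto intro!: inj_onI dest: injD)
  have "poly ?R (\<phi> c * y) = 0" if "c \<in> F" for c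
  proof -
    have "y ^ (q - 1) * y = y ^ q" using q by (metis Suc_diff_1 less_le_trans pos2 power_Suc2)
    hence "poly ?R (\<phi> c * y) = \<phi> (c ^ q) * y ^ q - \<phi> c * y ^ q"
      by (simp add: poly_monom hom_power power_mult_distrib algebra_simps)
    thus ?thesis using Fq[OF that] by simp
  qed
  moreover have "degree ?R \<le> q"
    by (rule degree_diff_le) (use q in \<open>auto intro: degree_monom_le order.trans[OF degree_pCons_le]\<close>)
  moreover have c1: "coeff ?R q = 1" using q by (simp add: coeff_pCons split: nat.splits)
  moreover have "?R \<noteq> 0" using c1 by (metis coeff_0 zero_neq_one)
  ultimately have "?R = smult (coeff ?R (card F)) (\<Prod>c\<in>F. [:-(\<phi> c * y), 1:])"
    using card by (intro poly_eq_smult_prod_roots[OF fin injF]) auto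
  with c1 show ?thesis using card by simp
qed

lemma pcompose_monom_one: "pcompose (monom 1 k) r = r ^ k"
  by (simp add: pcompose_altdef map_poly_monom poly_monom)

interpretation subst: comm_ring_hom "subst s :: 'a::comm_ring_1 mpoly3 \<Rightarrow> 'a mpoly3" for s
  by (rule subst_hom)

lemma subst_Const [simp]: "subst s (Const c) = Const c"
  by (simp add: subst_eq_eval_mpoly Const.eval_mpoly_Const)

lemma subst_Var: "subst s (Var v) = s v"
  by (simp add: subst_eq_eval_mpoly Const.eval_mpoly_Var)

lemma alg_gen_subset_invariants:
  assumes "S \<subseteq> invariants_P q"
  shows "alg_gen S \<subseteq> (invariants_P q :: 'a::field mpoly3 set)"
proof
  fix f assume "f \<in> alg_gen S"
  thus "f \<in> invariants_P q"
    by induction (use assms in \<open>auto simp: invariants_P_def subst.hom_add subst.hom_mult\<close>)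
qed

lemmas Const_hom_simps = Const.hom_add Const.hom_mult Const.hom_diff Const.hom_power Const.hom_numeral

lemma sigma_act_a0: "subst (sigma_act c) a0 = a0"
  and sigma_act_a1: "subst (sigma_act c) a1 = a1 + Const c * a0"
  and sigma_act_a2: "subst (sigma_act c) a2 = a2 + Const (2 * c) * a1 + Const (c ^ 2) * a0"
  by (simp_all add: subst_Var sigma_act_def)

lemmas sigma_act_simps = sigma_act_a0 sigma_act_a1 sigma_act_a2 subst.hom_add subst.hom_mult
  subst.hom_diff subst.hom_power subst.hom_prod subst_Const

lemma Delta_invariant: "subst (sigma_act c) Delta = (Delta :: 'a::comm_ring_1 mpoly3)"
  by (simp add: Delta_def sigma_act_simps Const_hom_simps algebra_simps power2_eq_square)

text \<open>The hypotheses on \<open>p, n, q\<close> enter only through these consequences.\<close>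
locale odd_Fq =
  fixes q :: nat and field :: "'a::field itself"
  assumes q_odd: "odd q" and q_gt_1: "q > 1" and two_nonzero: "(2::'a) \<noteq> 0"
    and card_Fq: "card (Fq q :: 'a set) = q"
    and power_q_add: "(x + y :: 'a) ^ q = x ^ q + y ^ q"
begin

abbreviation F :: "'a set" where "F \<equiv> Fq q"

lemma q_ge_3: "q \<ge> 3"
  using q_odd q_gt_1 by (auto elim!: oddE)

lemma finite_Fq: "finite F"
  using card_Fq q_gt_1 card.infinite by fastforce

lemma Fq_add: "c \<in> F \<Longrightarrow> d \<in> F \<Longrightarrow> c + d \<in> F"
  by (simp add: Fq_def power_q_add)

lemma Fq_uminus: "c \<in> F \<Longrightarrow> - c \<in> F"
  using q_odd by (simp add: Fq_def power_minus_odd)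

lemma Fq_diff: "c \<in> F \<Longrightarrow> d \<in> F \<Longrightarrow> c - d \<in> F"
  using Fq_add[of c "- d"] Fq_uminus[of d] by simp

lemma bij_betw_Fq_add: "c \<in> F \<Longrightarrow> bij_betw (\<lambda>d. c + d) F F"
  by (rule bij_betw_byWitness[where f' = "\<lambda>d. d - c"]) (auto intro: Fq_add Fq_diff)

lemma bij_betw_Fq_diff: "c \<in> F \<Longrightarrow> bij_betw (\<lambda>d. c - d) F F"
  by (rule bij_betw_byWitness[where f' = "\<lambda>d. c - d"]) (auto intro: Fq_diff)

lemma beta_invariant:
  assumes "c \<in> F" shows "subst (sigma_act c) (beta_inv q) = beta_inv q"
proof -
  have "subst (sigma_act c) (beta_inv q) = (\<Prod>d\<in>F. a1 + Const (c + d) * a0)"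
    by (simp add: beta_inv_def sigma_act_simps Const_hom_simps algebra_simps)
  also have "\<dots> = beta_inv q"
    using prod.reindex_bij_betw[OF bij_betw_Fq_add[OF assms], of "\<lambda>d. a1 + Const d * a0"]
    by (simp add: beta_inv_def)
  finally show ?thesis .
qed

lemma gamma_invariant:
  assumes "c \<in> F" shows "subst (sigma_act c) (gamma_inv q k) = gamma_inv q k"
proof -
  have "subst (sigma_act c) (gamma_inv q k)
      = (\<Prod>d\<in>F. a2 + Const (2 * (c + d)) * a1 + Const ((c + d)^2 - k) * a0)"
    unfolding gamma_inv_def sigma_act_simps
    by (intro prod.cong refl) (simp add: Const_hom_simps algebra_simps power2_eq_square)
  also have "\<dots> = gamma_inv q k"
    using prod.reindex_bij_betw[OF bij_betw_Fq_add[OF assms],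
        of "\<lambda>d. a2 + Const (2 * d) * a1 + Const (d^2 - k) * a0"]
    by (simp add: gamma_inv_def)
  finally show ?thesis .
qed

lemma generators_invariant: "{a0, Delta, beta_inv q, gamma_inv q (0::'a)} \<subseteq> invariants_P q"
  by (auto simp: invariants_P_def sigma_act_a0 Delta_invariant beta_invariant gamma_invariant)

end

section \<open>The relation between the generators\<close>

definition x0 :: "'a::comm_ring_1 poly poly" where
  "x0 = [:[:0, 1:]:]"

definition lin_a1 :: "'a::comm_ring_1 \<Rightarrow> 'a poly poly" where
  "lin_a1 c = [:[:0, c:], 1:]"

lemma to_poly3_a0: "to_poly3 (a0 :: 'a::comm_ring_1 mpoly3) = [:x0:]"
  by (simp add: to_poly3_Var var3_def x0_def)

lemma to_poly3_lin_a1: "to_poly3 (a1 + Const c * (a0 :: 'a::comm_ring_1 mpoly3)) = [:lin_a1 c:]"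
  by (simp add: to_poly3.hom_add to_poly3.hom_mult to_poly3_Var to_poly3_Const var3_def const3_def
      lin_a1_def)

lemma to_poly3_Delta: "to_poly3 (Delta :: 'a::comm_ring_1 mpoly3) = [:[:0, 1:] ^ 2, - x0:]"
  by (simp add: Delta_def to_poly3.hom_diff to_poly3.hom_mult to_poly3.hom_power to_poly3_Var
      var3_def x0_def power2_eq_square)

context odd_Fq
begin

definition beta2 :: "'a poly poly" where
  "beta2 = (\<Prod>c\<in>F. lin_a1 c)"

lemma to_poly3_beta: "to_poly3 (beta_inv q :: 'a mpoly3) = [:beta2:]"
  by (simp add: beta_inv_def to_poly3.hom_prod to_poly3_lin_a1 beta2_def const_poly.hom_prod)

lemma beta2_eq:
  assumes "c \<in> F"
  shows "beta2 = lin_a1 c ^ q - x0 ^ (q - 1) * lin_a1 c"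
proof -
  have hom: "comm_ring_hom (\<lambda>d::'a. [:[:d:]:])"
    by unfold_locales (simp_all add: pCons_one)
  have prod: "(\<Prod>d\<in>F. [:- ([:[:d:]:] * x0), 1:]) = monom 1 q - [:0, x0 ^ (q - 1):]"
    using q_ge_3 by (intro prod_linear_factors_Frobenius[OF hom _ _ finite_Fq card_Fq])
      (auto intro: injI simp: x0_def Fq_def)
  have "beta2 = (\<Prod>d\<in>F. lin_a1 (c - d))"
    unfolding beta2_def using prod.reindex_bij_betw[OF bij_betw_Fq_diff[OF assms], of lin_a1] by simp
  also have "\<dots> = poly (\<Prod>d\<in>F. [:- ([:[:d:]:] * x0), 1:]) (lin_a1 c)"
    by (simp add: poly_prod lin_a1_def x0_def)
  also have "\<dots> = lin_a1 c ^ q - x0 ^ (q - 1) * lin_a1 c"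
    unfolding prod by (simp add: poly_monom algebra_simps)
  finally show ?thesis .
qed

text \<open>As a polynomial in \<open>X\<close>, \<open>relation_poly\<close> vanishes at the \<open>q\<close> distinct points \<open>(a1 + c a0)\<^sup>2\<close>,
  because there it is \<open>\<beta>\<^sup>2 - (r\<^sup>q - a0\<^sup>q\<^sup>-\<^sup>1 r)\<^sup>2\<close> with \<open>r = a1 + c a0\<close>.\<close>
definition relation_poly :: "'a poly3" where
  "relation_poly = [:beta2 ^ 2:] - monom 1 q + smult (2 * x0 ^ (q - 1)) (monom 1 ((q + 1) div 2))
     - smult (x0 ^ (2 * (q - 1))) (monom 1 1)"

lemma relation_poly_root:
  assumes "c \<in> F"
  shows "poly relation_poly (lin_a1 c ^ 2) = 0"
proof -
  let ?r = "lin_a1 c" and ?A = "x0 ^ (q - 1) :: 'a poly poly"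
  have "2 * (Suc q div 2) = Suc q" using q_odd by (auto elim!: oddE)
  hence odd_power: "(?r ^ 2) ^ (Suc q div 2) = ?r ^ q * ?r"
    by (simp flip: power_mult)
  have "(?r ^ 2) ^ q = (?r ^ q) ^ 2" "x0 ^ (2 * (q - 1)) = ?A ^ 2"
    by (simp_all only: mult.commute flip: power_mult)
  hence "poly relation_poly (?r ^ 2) = beta2 ^ 2 - (?r ^ q) ^ 2 + 2 * ?A * (?r ^ q * ?r) - ?A ^ 2 * ?r ^ 2"
    by (simp add: relation_poly_def poly_monom odd_power)
  also have "\<dots> = beta2 ^ 2 - (?r ^ q - ?A * ?r) ^ 2"
    by (simp add: algebra_simps power2_eq_square)
  also have "\<dots> = 0" using beta2_eq[OF assms] by simp
  finally show ?thesis .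
qed

lemma relation_poly_eq_prod: "relation_poly = - (\<Prod>c\<in>F. [:- (lin_a1 c ^ 2), 1:])"
proof -
  have inj: "inj_on (\<lambda>c. lin_a1 c ^ 2) F"
  proof (rule inj_onI)
    fix c d :: 'a assume "lin_a1 c ^ 2 = lin_a1 d ^ 2"
    hence "lin_a1 c = lin_a1 d \<or> lin_a1 c = - lin_a1 d"
      by (simp add: power2_eq_square square_eq_iff)
    moreover have "lin_a1 c \<noteq> - lin_a1 d"
    proof
      assume "lin_a1 c = - lin_a1 d"
      hence "coeff (coeff (lin_a1 c) 1) 0 = coeff (coeff (- lin_a1 d) 1) 0" by simp
      hence "(2::'a) = 0" by (simp add: lin_a1_def)
      thus False using two_nonzero by simp
    qed
    ultimately show "c = d" using two_nonzero by (auto simp: lin_a1_def)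
  qed
  have coeff_q: "coeff relation_poly q = -1"
    using q_ge_3 q_odd by (auto simp: relation_poly_def elim!: oddE)
  have "degree relation_poly \<le> q"
    unfolding relation_poly_def using q_ge_3
    by (intro degree_diff_le degree_add_le order.trans[OF degree_smult_le] order.trans[OF degree_monom_le])
      (auto intro: order.trans[OF degree_pCons_le])
  moreover have "relation_poly \<noteq> 0" using coeff_q by auto
  ultimately show ?thesis
    using poly_eq_smult_prod_roots[OF finite_Fq inj relation_poly_root] card_Fq coeff_q by simp
qed

lemma beta_square_relation:
  "beta_inv q ^ 2 = a0 ^ q * gamma_inv q 0 + Delta ^ q
     - 2 * a0 ^ (q - 1) * Delta ^ ((q + 1) div 2) + a0 ^ (2 * (q - 1)) * (Delta :: 'a mpoly3)"
proof -
  let ?D = "to_poly3 (Delta :: 'a mpoly3)"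
  let ?g = "\<lambda>c. a2 + Const (2 * c) * a1 + Const (c ^ 2 - 0) * (a0 :: 'a mpoly3)"
  have factor: "pcompose [:- (lin_a1 c ^ 2), 1:] ?D = to_poly3 (- (a0 * ?g c))" for c
  proof -
    have "- (a0 * ?g c) = Delta - (a1 + Const c * a0) ^ 2"
      by (simp add: Delta_def Const_hom_simps algebra_simps power2_eq_square)
    hence "to_poly3 (- (a0 * ?g c)) = ?D - [:lin_a1 c:] ^ 2"
      by (simp add: to_poly3.hom_diff to_poly3.hom_power to_poly3_lin_a1)
    thus ?thesis by (simp add: pcompose_pCons const_poly.hom_power const_poly.hom_uminus)
  qed
  have "(\<Prod>c\<in>F. - (a0 * ?g c)) = (\<Prod>c\<in>F. - 1 * (a0 * ?g c))"
    by simp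
  also have "\<dots> = (\<Prod>c\<in>F. - 1) * ((\<Prod>c\<in>F. a0) * (\<Prod>c\<in>F. ?g c))"
    by (simp only: prod.distrib)
  also have "\<dots> = - (a0 ^ q * gamma_inv q 0)"
    using q_odd by (simp add: card_Fq gamma_inv_def)
  finally have prod: "(\<Prod>c\<in>F. - (a0 * ?g c)) = - (a0 ^ q * gamma_inv q 0)" .
  have "pcompose relation_poly ?D = - to_poly3 (\<Prod>c\<in>F. - (a0 * ?g c))"
    unfolding relation_poly_eq_prod pcompose_uminus pcompose_prod factor to_poly3.hom_prod ..
  also have "\<dots> = to_poly3 (a0 ^ q * gamma_inv q 0)"
    unfolding prod to_poly3.hom_uminus by simp
  finally have "pcompose relation_poly ?D = to_poly3 (a0 ^ q * gamma_inv q 0)" .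
  moreover have "pcompose relation_poly ?D = [:beta2 ^ 2:] - ?D ^ q
      + smult (2 * x0 ^ (q - 1)) (?D ^ ((q + 1) div 2)) - smult (x0 ^ (2 * (q - 1))) ?D"
    by (simp only: relation_poly_def pcompose_diff pcompose_add pcompose_smult pcompose_const
        pcompose_monom_one power_one_right)
  moreover have "\<dots> = to_poly3 (beta_inv q ^ 2 - Delta ^ q
      + 2 * a0 ^ (q - 1) * Delta ^ ((q + 1) div 2) - a0 ^ (2 * (q - 1)) * Delta)"
    by (simp add: to_poly3.hom_diff to_poly3.hom_add to_poly3.hom_mult to_poly3.hom_power
        to_poly3.hom_numeral to_poly3_beta to_poly3_a0 numeral_mult_conv_smult mult.commute[of _ 2]
        flip: const_poly.hom_power)
  ultimately show ?thesis
    using to_poly3_inj by (fastforce simp: algebra_simps)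
qed

end

section \<open>Every invariant times a power of \<open>a0\<close> lies in the generated algebra\<close>

lemma alg_gen_power: "f \<in> alg_gen S \<Longrightarrow> f ^ k \<in> alg_gen S"
proof (induction k)
  case 0
  have "Const 1 \<in> alg_gen S" by (rule alg_gen.const)
  thus ?case by (simp add: Const.hom_1)
qed (simp add: alg_gen.mult)

lemma alg_gen_diff: "f \<in> alg_gen S \<Longrightarrow> g \<in> alg_gen S \<Longrightarrow> f - g \<in> alg_gen S"
proof -
  assume "f \<in> alg_gen S" "g \<in> alg_gen S"
  hence "f + Const (- 1) * g \<in> alg_gen S" by (intro alg_gen.add alg_gen.mult alg_gen.const)
  thus ?thesis by (simp add: Const.hom_uminus Const.hom_1)
qed

lemma sum_in_monoid_gen: "(\<And>i. i \<in> I \<Longrightarrow> f i \<in> monoid_gen S) \<Longrightarrow> (\<Sum>i\<in>I. f i) \<in> monoid_gen S"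
  by (induction I rule: infinite_finite_induct) (auto intro: monoid_gen.unit monoid_gen.mult)

lemma shift_a1_leading_coeff:
  assumes "sigma3 c P = (P :: 'a::idom poly3)"
  shows "shift_a1 c (lead_coeff P) = lead_coeff P"
proof -
  interpret shift: comm_ring_hom "shift_a1 c" by (rule shift_a1_hom)
  have nz: "x \<noteq> 0 \<Longrightarrow> shift_a1 c x \<noteq> 0" for x :: "'a poly poly"
    unfolding shift_a1_def using pcompose_eq_0[of x "[:[:0, c:], 1:]"] by auto
  have "lead_coeff (sigma3 c P) = lead_coeff (map_poly (shift_a1 c) P)"
    unfolding sigma3_def by (subst lead_coeff_comp) simp_all
  also have "\<dots> = shift_a1 c (lead_coeff P)"
    by (cases "P = 0") (simp_all add: shift.hom_0 lead_coeff_map_poly_nz nz)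
  finally show ?thesis using assms by simp
qed

context odd_Fq
begin

abbreviation generators :: "'a mpoly3 set" where
  "generators \<equiv> {a0, Delta, beta_inv q, gamma_inv q 0}"

abbreviation gen_poly3 :: "'a poly3 set" where
  "gen_poly3 \<equiv> to_poly3 ` alg_gen generators"

lemma gen_poly3_add: "P \<in> gen_poly3 \<Longrightarrow> Q \<in> gen_poly3 \<Longrightarrow> P + Q \<in> gen_poly3"
  by (auto simp flip: to_poly3.hom_add intro!: imageI alg_gen.add)

lemma gen_poly3_mult: "P \<in> gen_poly3 \<Longrightarrow> Q \<in> gen_poly3 \<Longrightarrow> P * Q \<in> gen_poly3"
  by (auto simp flip: to_poly3.hom_mult intro!: imageI alg_gen.mult)

lemma gen_poly3_power: "P \<in> gen_poly3 \<Longrightarrow> P ^ k \<in> gen_poly3"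
  by (auto simp flip: to_poly3.hom_power intro!: imageI alg_gen_power)

lemma gen_poly3_diff: "P \<in> gen_poly3 \<Longrightarrow> Q \<in> gen_poly3 \<Longrightarrow> P - Q \<in> gen_poly3"
  by (auto simp flip: to_poly3.hom_diff intro!: imageI alg_gen_diff)

lemma gen_poly3_const: "const3 c \<in> gen_poly3"
  by (auto simp flip: to_poly3_Const intro!: imageI alg_gen.const)

lemma gen_poly3_uminus: "P \<in> gen_poly3 \<Longrightarrow> - P \<in> gen_poly3"
  using gen_poly3_diff[OF gen_poly3_const[of 0]] by (simp add: const3.hom_0)

lemma gen_poly3_generator: "f \<in> generators \<Longrightarrow> to_poly3 f \<in> gen_poly3"
  by (auto intro: alg_gen.gen)

lemma gen_poly3_a0_poly: "[:[:w:]:] \<in> gen_poly3"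
proof (induction w)
  case 0
  show ?case using gen_poly3_const[of 0] by (simp add: const3_def)
next
  case (pCons c w)
  have "const3 c + [:x0:] * [:[:w:]:] \<in> gen_poly3"
    using gen_poly3_generator[of a0] by (intro gen_poly3_add gen_poly3_mult gen_poly3_const pCons.IH)
      (simp_all add: to_poly3_a0)
  thus ?case by (simp add: const3_def x0_def)
qed

lemma beta2_eq_prod: "beta2 = (\<Prod>c\<in>F. [:- [:0, c:], 1:])"
proof -
  have "bij_betw uminus F F" by (rule bij_betw_byWitness[where f' = uminus]) (auto intro: Fq_uminus)
  thus ?thesis
    unfolding beta2_def using prod.reindex_bij_betw[of uminus F F lin_a1] by (simp add: lin_a1_def)
qed

lemma beta2_degree: "degree beta2 = q" and beta2_nonzero: "beta2 \<noteq> 0"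
proof -
  have "inj_on (\<lambda>c. [:0, c:]) F" by (rule inj_onI) simp
  hence "degree (\<Prod>x\<in>(\<lambda>c::'a. [:0, c:]) ` F. [:- x, 1:]) = q"
    using card_Fq finite_Fq by (simp add: degree_prod_sum_eq card_image)
  thus "degree beta2 = q" using \<open>inj_on _ F\<close> by (simp add: beta2_eq_prod prod.reindex)
  thus "beta2 \<noteq> 0" using q_ge_3 by auto
qed

lemma beta2_shift_invariant: "c \<in> F \<Longrightarrow> shift_a1 c beta2 = beta2"
proof -
  assume c: "c \<in> F"
  interpret shift: comm_ring_hom "shift_a1 c" by (rule shift_a1_hom)
  have "shift_a1 c beta2 = (\<Prod>d\<in>F. lin_a1 (c + d))"
    unfolding beta2_def shift.hom_prod by (simp add: shift_a1_def lin_a1_def pcompose_pCons add.commute)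
  also have "\<dots> = beta2"
    unfolding beta2_def using prod.reindex_bij_betw[OF bij_betw_Fq_add[OF c], of lin_a1] by simp
  finally show ?thesis .
qed

text \<open>The invariants of \<open>F[a0][a1]\<close> are polynomials in \<open>a0\<close> and \<open>\<beta>\<close>: an invariant vanishing at
  \<open>a1 = 0\<close> vanishes at every \<open>a1 = c a0\<close>, hence is divisible by \<open>\<beta>\<close>.\<close>
lemma shift_invariant_in_gen_poly3:
  "(\<forall>c\<in>F. shift_a1 c u = u) \<Longrightarrow> [:u:] \<in> gen_poly3"
proof (induction "degree u" arbitrary: u rule: less_induct)
  case less
  interpret shift: comm_ring_hom "shift_a1 c" for c by (rule shift_a1_hom)
  define a where "a = coeff u 0"
  define v where "v = u - [:a:]"
  have v_invariant: "shift_a1 c v = v" if "c \<in> F" for c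
    using less.prems that by (simp add: v_def shift.hom_diff)
  have "(\<Prod>x\<in>(\<lambda>c. [:0, c:]) ` F. [:- x, 1:]) dvd v"
  proof (rule prod_linear_factors_dvd)
    fix x assume "x \<in> (\<lambda>c. [:0, c:]) ` F"
    then obtain c where c: "c \<in> F" "x = [:0, c:]" by auto
    have "poly v x = poly (shift_a1 c v) 0" by (simp add: shift_a1_def poly_pcompose c)
    also have "\<dots> = 0" using v_invariant[OF c(1)] by (simp add: v_def a_def poly_0_coeff_0)
    finally show "poly v x = 0" .
  qed (use finite_Fq in auto)
  moreover have "inj_on (\<lambda>c. [:0, c:]) F" by (rule inj_onI) simp
  ultimately have "beta2 dvd v" by (simp add: beta2_eq_prod prod.reindex)
  then obtain w where w: "v = beta2 * w" by (elim dvdE)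
  have u: "u = [:a:] + beta2 * w" by (simp add: v_def flip: w)
  show ?case
  proof (cases "w = 0")
    case True
    thus ?thesis using gen_poly3_a0_poly[of a] u by simp
  next
    case False
    have "degree v \<le> degree u" unfolding v_def by (rule degree_diff_le) auto
    hence degree_w: "degree w < degree u"
      using degree_mult_eq[OF beta2_nonzero False] beta2_degree q_ge_3 w by simp
    have "shift_a1 c w = w" if "c \<in> F" for c
      using v_invariant[OF that] w beta2_shift_invariant[OF that] beta2_nonzero
      by (simp add: shift.hom_mult)
    hence "[:w:] \<in> gen_poly3" using less.hyps[OF degree_w] by blast
    hence "[:[:a:]:] + [:beta2:] * [:w:] \<in> gen_poly3"
      using gen_poly3_generator[of "beta_inv q"]
      by (intro gen_poly3_add gen_poly3_mult gen_poly3_a0_poly) (simp_all add: to_poly3_beta)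
    thus ?thesis by (simp only: u const_poly.hom_add const_poly.hom_mult)
  qed
qed

text \<open>Induction on the degree in \<open>a2\<close>: since \<open>-\<Delta> = a0 a2 - a1\<^sup>2\<close> has leading coefficient \<open>a0\<close>,
  \<open>a0\<^sup>K P - p (-\<Delta>)\<^sup>K\<close> has lower degree, where \<open>p\<close> is the (invariant) leading coefficient of \<open>P\<close>.\<close>
lemma sigma3_invariant_localized:
  "(\<forall>c\<in>F. sigma3 c P = P) \<Longrightarrow> \<exists>N. [:x0:] ^ N * P \<in> gen_poly3"
proof (induction "degree P" arbitrary: P rule: less_induct)
  case less
  define K where "K = degree P"
  define p where "p = lead_coeff P"
  have p_invariant: "\<forall>c\<in>F. shift_a1 c p = p"
    using less.prems shift_a1_leading_coeff unfolding p_def by blast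
  have p_gen: "[:p:] \<in> gen_poly3" by (rule shift_invariant_in_gen_poly3[OF p_invariant])
  show ?case
  proof (cases "K = 0")
    case True
    hence "P = [:p:]" unfolding p_def K_def by (metis degree_eq_zeroE lead_coeff_pCons(2) pCons_0_0)
    thus ?thesis using p_gen by (intro exI[of _ 0]) simp
  next
    case False
    define mD where "mD = - to_poly3 (Delta :: 'a mpoly3)"
    have mD: "mD = [:- ([:0, 1:] ^ 2), x0:]" by (simp add: mD_def to_poly3_Delta)
    have "x0 \<noteq> (0 :: 'a poly poly)" by (simp add: x0_def)
    hence "degree mD = 1" "lead_coeff mD = x0" "mD \<noteq> 0" by (auto simp: mD)
    hence deg_mDK: "degree (mD ^ K) = K" and lead_mDK: "lead_coeff (mD ^ K) = x0 ^ K"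
      by (simp add: degree_power_eq, simp only: lead_coeff_power)
    define P' where "P' = [:x0 ^ K:] * P - [:p:] * mD ^ K"
    have "degree P' < K"
    proof -
      have "degree P' \<le> K" unfolding P'_def
        by (rule degree_diff_le; rule order.trans[OF degree_mult_le])
          (simp_all add: deg_mDK flip: K_def)
      moreover have "coeff P' K = 0"
        using lead_mDK deg_mDK by (simp add: P'_def K_def p_def)
      ultimately show ?thesis
        using False by (metis leading_coeff_0_iff degree_0 le_neq_implies_less)
    qed
    moreover have "\<forall>c\<in>F. sigma3 c P' = P'"
    proof
      fix c assume c: "c \<in> F"
      interpret sigma3: comm_ring_hom "sigma3 c" by (rule sigma3_hom)
      have "sigma3 c mD = mD"
        by (simp add: mD_def sigma3.hom_uminus Delta_invariant flip: to_poly3_subst_sigma)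
      moreover have "sigma3 c [:x0 ^ K:] = [:x0 ^ K:]"
        by (simp add: x0_def shift_a1_def flip: const_poly.hom_power)
      moreover have "sigma3 c [:p:] = [:p:]" "sigma3 c P = P"
        using less.prems p_invariant c by simp_all
      ultimately show "sigma3 c P' = P'"
        unfolding P'_def sigma3.hom_diff sigma3.hom_mult sigma3.hom_power by (simp only:)
    qed
    ultimately obtain N where N: "[:x0:] ^ N * P' \<in> gen_poly3" using less.hyps K_def by blast
    have "[:x0:] ^ N * P' + [:x0:] ^ N * ([:p:] * (- to_poly3 Delta) ^ K) \<in> gen_poly3"
      using gen_poly3_generator[of a0] gen_poly3_generator[of Delta]
      by (intro gen_poly3_add N gen_poly3_mult gen_poly3_power gen_poly3_uminus p_gen)
        (simp_all add: to_poly3_a0)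
    moreover have "[:x0:] ^ N * P' + [:x0:] ^ N * ([:p:] * mD ^ K) = [:x0:] ^ (N + K) * P"
      by (simp add: P'_def algebra_simps power_add const_poly.hom_power)
    ultimately show ?thesis unfolding mD_def by metis
  qed
qed

lemma invariant_localized_in_alg_gen:
  assumes "f \<in> invariants_P q"
  shows "\<exists>N. a0 ^ N * f \<in> alg_gen generators"
proof -
  have "\<forall>c\<in>F. sigma3 c (to_poly3 f) = to_poly3 f"
    using assms by (simp add: invariants_P_def flip: to_poly3_subst_sigma)
  then obtain N where "[:x0:] ^ N * to_poly3 f \<in> gen_poly3"
    using sigma3_invariant_localized by blast
  then obtain g where "g \<in> alg_gen generators" "to_poly3 (a0 ^ N * f) = to_poly3 g"
    by (auto simp: to_poly3.hom_mult to_poly3.hom_power to_poly3_a0)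
  thus ?thesis using to_poly3_inj by metis
qed

section \<open>Standard monomials\<close>

text \<open>Because \<open>\<beta>\<^sup>2\<close> is a polynomial in \<open>a0, \<Delta>, \<gamma>\<^sub>0\<close>, the generated algebra is spanned by the
  products \<open>a0\<^sup>i \<Delta>\<^sup>b \<beta>\<^sup>e \<gamma>\<^sub>0\<^sup>g\<close> with \<open>e \<le> 1\<close>.\<close>
definition std_monom :: "nat \<times> nat \<times> bool \<times> nat \<Rightarrow> 'a mpoly3" where
  "std_monom t = (case t of (i, b, e, g) \<Rightarrow>
     a0 ^ i * Delta ^ b * (if e then beta_inv q else 1) * gamma_inv q 0 ^ g)"

definition std_span :: "'a mpoly3 set" where
  "std_span = {(\<Sum>t\<in>T. Const (c t) * std_monom t) | T c. finite T}"

lemma std_span_sum: "finite T \<Longrightarrow> (\<Sum>t\<in>T. Const (c t) * std_monom t) \<in> std_span"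
  unfolding std_span_def by blast

lemma std_span_monom: "Const a * std_monom t \<in> std_span"
  using std_span_sum[of "{t}" "\<lambda>_. a"] by simp

lemma std_span_zero: "0 \<in> std_span"
  using std_span_sum[of "{}"] by simp

lemma std_span_add:
  assumes "f \<in> std_span" "g \<in> std_span" shows "f + g \<in> std_span"
proof -
  obtain T c where T: "finite T" "f = (\<Sum>t\<in>T. Const (c t) * std_monom t)"
    using assms(1) by (auto simp: std_span_def)
  obtain U d where U: "finite U" "g = (\<Sum>t\<in>U. Const (d t) * std_monom t)"
    using assms(2) by (auto simp: std_span_def)
  let ?c = "\<lambda>t. (if t \<in> T then c t else 0)" and ?d = "\<lambda>t. (if t \<in> U then d t else 0)"
  have "f = (\<Sum>t\<in>T \<union> U. Const (?c t) * std_monom t)" "g = (\<Sum>t\<in>T \<union> U. Const (?d t) * std_monom t)"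
    unfolding T(2) U(2) using T(1) U(1)
    by (auto intro!: sum.mono_neutral_cong_left simp: Const.hom_0)
  hence "f + g = (\<Sum>t\<in>T \<union> U. Const (?c t + ?d t) * std_monom t)"
    by (simp add: Const.hom_add distrib_right sum.distrib)
  thus ?thesis using T(1) U(1) std_span_sum by simp
qed

lemma std_span_Const_mult: "f \<in> std_span \<Longrightarrow> Const a * f \<in> std_span"
  by (auto simp: std_span_def sum_distrib_left Const.hom_mult mult.assoc
      intro!: exI[of _ "\<lambda>t. a * _ t"])

lemma std_span_diff: "f \<in> std_span \<Longrightarrow> g \<in> std_span \<Longrightarrow> f - g \<in> std_span"
  using std_span_add[of f "Const (- 1) * g"] std_span_Const_mult[of g "- 1"]
  by (simp add: Const.hom_uminus Const.hom_1)

lemma std_span_sum_closed: "(\<And>i. i \<in> I \<Longrightarrow> h i \<in> std_span) \<Longrightarrow> (\<Sum>i\<in>I. h i) \<in> std_span"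
  by (induction I rule: infinite_finite_induct) (auto intro: std_span_add std_span_zero)

lemma std_monom_in_std_span: "std_monom t \<in> std_span"
  using std_span_monom[of 1 t] by (simp add: Const.hom_1)

lemma std_monom_mult_in_std_span: "std_monom t * std_monom u \<in> std_span"
proof -
  obtain i b e g where t: "t = (i, b, e, g)" by (cases t)
  obtain i' b' e' g' where u: "u = (i', b', e', g')" by (cases u)
  have mult: "std_monom (i, b, False, g) * (a0 ^ i' * Delta ^ b' * gamma_inv q 0 ^ g')
      = std_monom (i + i', b + b', False, g + g')" for i b g i' b' g'
    by (simp add: std_monom_def power_add algebra_simps)
  show ?thesis
  proof (cases "e \<and> e'")
    case False
    hence "std_monom t * std_monom u = std_monom (i + i', b + b', e \<or> e', g + g')"
      by (auto simp: t u std_monom_def power_add algebra_simps)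
    thus ?thesis using std_monom_in_std_span by simp
  next
    case True
    let ?s = "std_monom (i + i', b + b', False, g + g')"
    have "std_monom t * std_monom u = ?s * beta_inv q ^ 2"
      using True by (simp add: t u std_monom_def power_add algebra_simps power2_eq_square)
    also have "\<dots> = ?s * (a0 ^ q * Delta ^ 0 * gamma_inv q 0 ^ 1)
        + ?s * (a0 ^ 0 * Delta ^ q * gamma_inv q 0 ^ 0)
        - Const 2 * (?s * (a0 ^ (q - 1) * Delta ^ ((q + 1) div 2) * gamma_inv q 0 ^ 0))
        + ?s * (a0 ^ (2 * (q - 1)) * Delta ^ 1 * gamma_inv q 0 ^ 0)"
      unfolding beta_square_relation by (simp add: Const.hom_numeral algebra_simps)
    also have "\<dots> \<in> std_span" unfolding mult
      by (intro std_span_add std_span_diff std_span_Const_mult std_monom_in_std_span)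
    finally show ?thesis .
  qed
qed

lemma std_span_mult:
  assumes "f \<in> std_span" "g \<in> std_span" shows "f * g \<in> std_span"
proof -
  obtain T c where T: "f = (\<Sum>t\<in>T. Const (c t) * std_monom t)"
    using assms(1) by (auto simp: std_span_def)
  obtain U d where U: "g = (\<Sum>t\<in>U. Const (d t) * std_monom t)"
    using assms(2) by (auto simp: std_span_def)
  have "f * g = (\<Sum>t\<in>T. \<Sum>u\<in>U. Const (c t * d u) * (std_monom t * std_monom u))"
    by (simp add: T U sum_product Const.hom_mult algebra_simps)
  also have "\<dots> \<in> std_span"
    by (intro std_span_sum_closed std_span_Const_mult std_monom_mult_in_std_span)
  finally show ?thesis .
qed

lemma alg_gen_subset_std_span: "alg_gen generators \<subseteq> std_span"
proof
  fix f assume "f \<in> alg_gen generators"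
  thus "f \<in> std_span"
  proof induction
    case (const c)
    show ?case using std_span_monom[of c "(0, 0, False, 0)"] by (simp add: std_monom_def)
  next
    case (gen f)
    have e: "a0 = std_monom (1, 0, False, 0)" "Delta = std_monom (0, 1, False, 0)"
      "beta_inv q = std_monom (0, 0, True, 0)" "gamma_inv q 0 = std_monom (0, 0, False, 1)"
      by (simp_all add: std_monom_def)
    from gen consider "f = a0" | "f = Delta" | "f = beta_inv q" | "f = gamma_inv q 0" by blast
    thus ?case by cases (simp_all only: e std_monom_in_std_span)
  qed (simp_all add: std_span_add std_span_mult)
qed

definition std_lead :: "nat \<times> nat \<times> bool \<times> nat \<Rightarrow> monom" where
  "std_lead t = (case t of (i, b, e, g) \<Rightarrow>
     single A0 i + single A1 (2 * b + (if e then q else 0)) + single A2 (q * g))"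

definition lead_monoid :: "monom set" where
  "lead_monoid = {m. q dvd lookup m A2 \<and> (even (lookup m A1) \<or> q \<le> lookup m A1)}"

lemma lead_monom_std_monom: "std_monom t \<noteq> 0 \<and> lead_monom (std_monom t) = std_lead t"
proof -
  obtain i b e g where t: "t = (i, b, e, g)" by (cases t)
  define B where "B = (if e then beta_inv q else (1 :: 'a mpoly3))"
  have B: "B \<noteq> 0" "lead_monom B = (if e then single A1 q else 0)"
    using lead_monom_beta[OF finite_Fq] card_Fq by (auto simp: B_def lead_monom_one)
  have a: "(a0 :: 'a mpoly3) ^ i \<noteq> 0 \<and> lookup (lead_monom ((a0 :: 'a mpoly3) ^ i)) v
      = i * lookup (single A0 1) v" for v
    using lead_monom_power[OF lead_monom_a0(2)] by (simp add: lead_monom_a0)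
  have d: "(Delta :: 'a mpoly3) ^ b \<noteq> 0 \<and> lookup (lead_monom ((Delta :: 'a mpoly3) ^ b)) v
      = b * lookup (single A1 2) v" for v
    using lead_monom_power[OF lead_monom_Delta(2)] by (simp add: lead_monom_Delta)
  have g: "gamma_inv q (0::'a) ^ g \<noteq> 0 \<and> lookup (lead_monom (gamma_inv q (0::'a) ^ g)) v
      = g * lookup (single A2 q) v" for v
    using lead_monom_power[OF lead_monom_gamma(2)[OF finite_Fq]]
    by (simp add: lead_monom_gamma[OF finite_Fq] card_Fq)
  have s: "std_monom t = a0 ^ i * Delta ^ b * B * gamma_inv q 0 ^ g"
    by (simp add: std_monom_def t B_def)
  have "std_monom t \<noteq> 0" unfolding s using a d g B by (simp add: lead_monom_mult)
  moreover have "lead_monom (std_monom t)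
      = lead_monom ((a0 :: 'a mpoly3) ^ i) + lead_monom ((Delta :: 'a mpoly3) ^ b) + lead_monom B
        + lead_monom (gamma_inv q (0::'a) ^ g)"
    unfolding s using a d g B by (simp add: lead_monom_mult)
  moreover have "\<dots> = std_lead t"
    using a d g B by (intro monom_eqI) (simp_all add: std_lead_def t lookup_add lookup_single)
  ultimately show ?thesis by simp
qed

lemma std_lead_inj: "std_lead t = std_lead t' \<Longrightarrow> t = t'"
proof -
  assume eq: "std_lead t = std_lead t'"
  obtain i b e g where t: "t = (i, b, e, g)" by (cases t)
  obtain i' b' e' g' where t': "t' = (i', b', e', g')" by (cases t')
  have "i = i'" "q * g = q * g'" and A1: "2 * b + (if e then q else 0) = 2 * b' + (if e' then q else 0)"
    using arg_cong[OF eq, of "\<lambda>m. lookup m A0"] arg_cong[OF eq, of "\<lambda>m. lookup m A2"]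
      arg_cong[OF eq, of "\<lambda>m. lookup m A1"]
    by (simp_all add: std_lead_def t t' lookup_add lookup_single)
  moreover have "e = e'" using A1 q_odd by (cases e; cases e'; simp; presburger)
  ultimately show ?thesis using A1 q_gt_1 by (auto simp: t t')
qed

lemma std_lead_in_lead_monoid: "std_lead t \<in> lead_monoid"
  by (cases t) (auto simp: std_lead_def lead_monoid_def lookup_add lookup_single)

lemma lead_monoid_std_lead:
  assumes "m \<in> lead_monoid" obtains t where "std_lead t = m"
proof -
  define j where "j = lookup m A1"
  define e where "e = odd j"
  have "q \<le> j" if e using assms that by (auto simp: lead_monoid_def j_def e_def)
  hence j: "2 * ((j - (if e then q else 0)) div 2) + (if e then q else 0) = j"
    using q_odd by (auto simp: e_def elim!: oddE)
  have "std_lead (lookup m A0, (j - (if e then q else 0)) div 2, e, lookup m A2 div q) = m"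
    using assms j by (intro monom_eqI) (auto simp: std_lead_def lead_monoid_def j_def lookup_add lookup_single)
  thus ?thesis by (rule that)
qed

text \<open>Distinct standard monomials have distinct lead monomials, so no cancellation can occur
  among the lead terms of a combination of them.\<close>
lemma lead_monom_std_span:
  assumes "f \<in> std_span" "f \<noteq> 0"
  shows "lead_monom f \<in> lead_monoid"
proof -
  obtain T c where T: "finite T" "f = (\<Sum>t\<in>T. Const (c t) * std_monom t)"
    using assms(1) by (auto simp: std_span_def)
  define T' where "T' = {t\<in>T. c t \<noteq> 0}"
  have fin: "finite T'" using T(1) by (simp add: T'_def)
  have f: "f = (\<Sum>t\<in>T'. Const (c t) * std_monom t)"
    unfolding T(2) T'_def using T(1) by (intro sum.mono_neutral_right) (auto simp: Const.hom_0)
  hence "T' \<noteq> {}" using assms(2) by auto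
  hence "Max ((\<lambda>t. grevlex_key (std_lead t)) ` T') \<in> (\<lambda>t. grevlex_key (std_lead t)) ` T'"
    using fin by (intro Max_in) auto
  then obtain t0 where t0: "t0 \<in> T'"
    "grevlex_key (std_lead t0) = Max ((\<lambda>t. grevlex_key (std_lead t)) ` T')"
    by (metis imageE)
  have below: "grevlex_key (std_lead t) < grevlex_key (std_lead t0)" if "t \<in> T' - {t0}" for t
  proof -
    have "grevlex_key (std_lead t) \<le> grevlex_key (std_lead t0)" using that t0 fin by auto
    moreover have "std_lead t \<noteq> std_lead t0" using that std_lead_inj by blast
    ultimately show ?thesis using grevlex_key_inj by (auto simp: order_le_less)
  qed
  have c0: "c t0 \<noteq> 0" using t0 by (simp add: T'_def)
  let ?h = "Const (c t0) * std_monom t0"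
  have h: "?h \<noteq> 0" "lead_monom ?h = std_lead t0"
    using lead_monom_std_monom[of t0] keys_Const_mult_eq[OF c0, of "std_monom t0"]
    by (auto simp: lead_monom_Const_mult[OF c0] simp flip: keys_eq_empty)
  have "lead_monom f = lead_monom (?h + (\<Sum>t\<in>T' - {t0}. Const (c t) * std_monom t))"
    unfolding f using fin t0(1) by (simp add: sum.remove)
  also have "\<dots> = std_lead t0"
  proof (subst lead_monom_add_below[OF h(1)])
    fix m assume "m \<in> keys (\<Sum>t\<in>T' - {t0}. Const (c t) * std_monom t)"
    then obtain t where "t \<in> T' - {t0}" "m \<in> keys (Const (c t) * std_monom t)"
      using keys_sum[of "\<lambda>t. Const (c t) * std_monom t" "T' - {t0}"] by blast
    thus "grevlex_key m < grevlex_key (lead_monom ?h)"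
      using keys_Const_mult lead_monom_max lead_monom_std_monom below h(2)
      by (metis order.strict_trans1 subsetD)
  qed (rule h(2))
  finally show ?thesis using std_lead_in_lead_monoid by simp
qed


lemma std_monom_in_alg_gen: "std_monom t \<in> alg_gen generators"
proof -
  obtain i b e g where t: "t = (i, b, e, g)" by (cases t)
  have "Const 1 \<in> alg_gen generators" by (rule alg_gen.const)
  hence "(if e then beta_inv q else 1) \<in> alg_gen generators"
    by (simp add: Const.hom_1 alg_gen.gen)
  thus ?thesis unfolding t std_monom_def prod.case
    by (intro alg_gen.mult alg_gen_power) (simp_all add: alg_gen.gen)
qed

lemma lead_monom_invariant:
  fixes f :: "'a mpoly3"
  assumes "f \<in> invariants_P q" "f \<noteq> 0"
  shows "lead_monom f \<in> lead_monoid"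
proof -
  obtain N where N: "(a0 :: 'a mpoly3) ^ N * f \<in> alg_gen generators"
    using invariant_localized_in_alg_gen[OF assms(1)] by blast
  have a: "(a0 :: 'a mpoly3) ^ N \<noteq> 0 \<and> lookup (lead_monom ((a0 :: 'a mpoly3) ^ N)) v
      = N * lookup (single A0 1) v" for v
    using lead_monom_power[OF lead_monom_a0(2)] by (simp add: lead_monom_a0)
  hence nz: "(a0 :: 'a mpoly3) ^ N * f \<noteq> 0"
    and lm: "lead_monom ((a0 :: 'a mpoly3) ^ N * f) = lead_monom ((a0 :: 'a mpoly3) ^ N) + lead_monom f"
    using lead_monom_mult[of "a0 ^ N" f] assms(2) by auto
  have "lead_monom ((a0 :: 'a mpoly3) ^ N * f) \<in> lead_monoid"
    using N alg_gen_subset_std_span nz by (intro lead_monom_std_span) auto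
  thus ?thesis using a by (simp add: lm lead_monoid_def lookup_add lookup_single)
qed

text \<open>Subduction: the lead monomial of an invariant is that of a standard monomial, so it can be
  cancelled by an element of the generated algebra.\<close>
lemma invariants_subset_alg_gen: "invariants_P q \<subseteq> alg_gen generators"
proof
  fix f :: "'a mpoly3"
  show "f \<in> invariants_P q \<Longrightarrow> f \<in> alg_gen generators"
  proof (induction f rule: wf_induct[OF wf_grevlex_lead_monom])
    case (1 f)
    show ?case
    proof (cases "f = 0")
      case True
      thus ?thesis using alg_gen.const[of 0] by (simp add: Const.hom_0)
    next
      case False
      obtain t where t: "std_lead t = lead_monom f"
        using lead_monoid_std_lead[OF lead_monom_invariant[OF "1.prems" False]] by blast
      let ?h = "std_monom t"
      have h_gen: "?h \<in> alg_gen generators" by (rule std_monom_in_alg_gen)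
      define g where "g = f - Const (lcoeff f / lcoeff ?h) * ?h"
      have "g \<in> invariants_P q" unfolding g_def
        using "1.prems" h_gen alg_gen_subset_invariants[OF generators_invariant]
        by (auto simp: invariants_P_def subst.hom_diff subst.hom_mult)
      hence "g \<in> alg_gen generators"
        using "1.IH" subduction_step[OF False _ _ g_def] lead_monom_std_monom[of t] t
        by (cases "g = 0") (auto intro: alg_gen.const[of 0, simplified Const.hom_0])
      moreover have "f = g + Const (lcoeff f / lcoeff ?h) * ?h" by (simp add: g_def)
      ultimately show ?thesis by (metis alg_gen.add alg_gen.mult alg_gen.const h_gen)
    qed
  qed
qed

lemma monoid_gen_generators: "monoid_gen (lead_monom ` (generators - {0})) = lead_monoid"
proof -
  have "generators - {0} = generators"
    using lead_monom_a0 lead_monom_Delta lead_monom_beta[OF finite_Fq] lead_monom_gamma[OF finite_Fq]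
    by auto
  hence gens: "lead_monom ` (generators - {0}) = {single A0 1, single A1 2, single A1 q, single A2 q}"
    using lead_monom_a0[where 'a='a] lead_monom_Delta[where 'a='a] lead_monom_beta[OF finite_Fq]
      lead_monom_gamma[OF finite_Fq] card_Fq by simp
  show ?thesis unfolding gens
  proof
    show "monoid_gen {single A0 1, single A1 2, single A1 q, single A2 q} \<subseteq> lead_monoid"
    proof
      fix m assume "m \<in> monoid_gen {single A0 1, single A1 2, single A1 q, single A2 q}"
      thus "m \<in> lead_monoid"
        by induction (auto simp: lead_monoid_def lookup_add lookup_single)
    qed
    show "lead_monoid \<subseteq> monoid_gen {single A0 1, single A1 2, single A1 q, single A2 q}"
    proof
      fix m assume "m \<in> lead_monoid"
      then obtain t where t: "std_lead t = m" by (rule lead_monoid_std_lead)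
      obtain i b e g where tt: "t = (i, b, e, g)" by (cases t)
      have "(\<Sum>_<i. single A0 1) + (\<Sum>_<b. single A1 2) + (if e then single A1 q else 0)
          + (\<Sum>_<g. single A2 q) \<in> monoid_gen {single A0 1, single A1 2, single A1 q, single A2 q}"
        by (intro monoid_gen.mult sum_in_monoid_gen)
          (auto intro: monoid_gen.gen monoid_gen.unit)
      moreover have "(\<Sum>_<i. single A0 1) + (\<Sum>_<b. single A1 2) + (if e then single A1 q else 0)
          + (\<Sum>_<g. single A2 q) = m"
        unfolding t[symmetric] tt
        by (intro monom_eqI) (simp_all add: std_lead_def lookup_add lookup_sum lookup_single)
      ultimately show "m \<in> monoid_gen {single A0 1, single A1 2, single A1 q, single A2 q}"
        by simp
    qed
  qed
qed

lemma lead_monoms_invariants: "lead_monom ` (invariants_P q - {0 :: 'a mpoly3}) = lead_monoid"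
proof
  show "lead_monom ` (invariants_P q - {0 :: 'a mpoly3}) \<subseteq> lead_monoid"
    using lead_monom_invariant by blast
  show "lead_monoid \<subseteq> lead_monom ` (invariants_P q - {0 :: 'a mpoly3})"
  proof
    fix m assume "m \<in> lead_monoid"
    then obtain t where t: "std_lead t = m" by (rule lead_monoid_std_lead)
    have "std_monom t \<in> invariants_P q"
      using alg_gen_subset_invariants[OF generators_invariant] std_monom_in_alg_gen by blast
    thus "m \<in> lead_monom ` (invariants_P q - {0 :: 'a mpoly3})"
      using lead_monom_std_monom[of t] t by force
  qed
qed

theorem invariants_eq_alg_gen_sagbi:
  "invariants_P q = alg_gen generators \<and> sagbi_basis generators (invariants_P q)"
proof
  show "invariants_P q = alg_gen generators"
    using invariants_subset_alg_gen alg_gen_subset_invariants[OF generators_invariant] by blast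
  show "sagbi_basis generators (invariants_P q)"
    unfolding sagbi_basis_def lead_monoms_invariants monoid_gen_generators
    using generators_invariant by blast
qed

end

theorem theorem2p5:
  fixes p n q :: nat
  assumes "prime p" and "p > 2" and "n \<ge> 1" and "q = p ^ n"
    and "CHAR('a::field) = p"
    and "card (Fq q :: 'a set) = q"
  shows "invariants_P q = alg_gen {a0, Delta, beta_inv q, gamma_inv q (0::'a)}
    \<and> sagbi_basis {a0, Delta, beta_inv q, gamma_inv q (0::'a)} (invariants_P q)"
proof -
  have "odd p" using assms(1,2) by (simp add: prime_odd_nat)
  interpret odd_Fq q "TYPE('a)"
  proof
    show "odd q" using \<open>odd p\<close> assms(4) by simp
    have "1 < p ^ n" using assms(2,3) by (intro one_less_power) auto
    thus "q > 1" using assms(4) by simp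
    show "(2::'a) \<noteq> 0"
      using assms(2,5) of_nat_eq_0_iff_char_dvd[of 2, where 'a='a] by (auto dest: dvd_imp_le)
    show "card (Fq q :: 'a set) = q" by (rule assms(6))
    show "(x + y) ^ q = x ^ q + y ^ q" for x y :: 'a
      using assms(1,4,5) by (intro freshmans_dream') simp_all
  qed
  show ?thesis by (rule invariants_eq_alg_gen_sagbi)
qed

end
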